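(* Let $G$ be a finitely generated acylindrically arboreal group. Then there exists a graph of groups decomposition $(\Gamma,\mathfrak{G})$ of $G$ with $\Gamma$ a finite graph such that the action of $G$ on the associated Bass–Serre tree is non-elementary and acylindrical. Furthermore, such a decomposition may be chosen to contain no contractible edges.
   Context: Groups are countable; trees are simplicial with actions without inversion. $G$ is acylindrically arboreal if it admits a non-elementary acylindrical action on a simplicial tree: acylindrical meaning for every $\epsilon\ge0$ there are $R(\epsilon),N(\epsilon)$ such that whenever $d(x,y)\ge R(\epsilon)$ at most $N(\epsilon)$ group elements move both $x,y$ by at most $\epsilon$; non-elementary meaning $G$ contains infinitely many independent loxodromic elements. For a graph of groups $(\Gamma,\mathfrak{G})$, if an edge $e$ is such that $\Gamma-e$ has exactly two components $\Gamma_a,\Gamma_b$, then $\pi_1(\Gamma,\mathfrak{G})\cong\pi_1(\Gamma_a,\mathfrak{G})*_{G_e}\pi_1(\Gamma_b,\mathfrak{G})$; such an edge is called contractible if this amalgam is trivial, i.e. $G_e$ equals one of the two factors. *)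

theory Defs
  imports Complex_Main "HOL-Algebra.Group_Action" "HOL-Algebra.Generated_Groups" "HOL-Library.Countable_Set"
begin

definition fin_gen :: "('a, 'b) monoid_scheme \<Rightarrow> bool" where
  "fin_gen G \<longleftrightarrow> (\<exists>S. finite S \<and> S \<subseteq> carrier G \<and> generate G S = carrier G)"

definition walk :: "('v \<Rightarrow> 'v \<Rightarrow> bool) \<Rightarrow> 'v list \<Rightarrow> bool" where
  "walk E xs \<longleftrightarrow> xs \<noteq> [] \<and> (\<forall>i. Suc i < length xs \<longrightarrow> E (xs ! i) (xs ! Suc i))"

definition simple_path :: "('v \<Rightarrow> 'v \<Rightarrow> bool) \<Rightarrow> 'v \<Rightarrow> 'v \<Rightarrow> 'v list \<Rightarrow> bool" where
  "simple_path E x y xs \<longleftrightarrow> walk E xs \<and> hd xs = x \<and> last xs = y \<and> distinct xs"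

definition is_tree :: "'v set \<Rightarrow> ('v \<Rightarrow> 'v \<Rightarrow> bool) \<Rightarrow> bool" where
  "is_tree V E \<longleftrightarrow> V \<noteq> {}
     \<and> (\<forall>x y. E x y \<longrightarrow> x \<in> V \<and> y \<in> V)
     \<and> (\<forall>x y. E x y \<longrightarrow> E y x)
     \<and> (\<forall>x. \<not> E x x)
     \<and> (\<forall>x\<in>V. \<forall>y\<in>V. \<exists>!xs. simple_path E x y xs)"

definition tdist :: "('v \<Rightarrow> 'v \<Rightarrow> bool) \<Rightarrow> 'v \<Rightarrow> 'v \<Rightarrow> nat" where
  "tdist E x y = (LEAST n. \<exists>xs. walk E xs \<and> hd xs = x \<and> last xs = y \<and> length xs = Suc n)"

definition gromov_prod :: "('v \<Rightarrow> 'v \<Rightarrow> bool) \<Rightarrow> 'v \<Rightarrow> 'v \<Rightarrow> 'v \<Rightarrow> real" where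
  "gromov_prod E x y z = (real (tdist E x y) + real (tdist E x z) - real (tdist E y z)) / 2"

definition tree_action ::
  "('a, 'b) monoid_scheme \<Rightarrow> 'v set \<Rightarrow> ('v \<Rightarrow> 'v \<Rightarrow> bool) \<Rightarrow> ('a \<Rightarrow> 'v \<Rightarrow> 'v) \<Rightarrow> bool" where
  "tree_action G V E \<phi> \<longleftrightarrow> is_tree V E \<and> group_action G V \<phi>
     \<and> (\<forall>g\<in>carrier G. \<forall>x\<in>V. \<forall>y\<in>V. E x y \<longleftrightarrow> E (\<phi> g x) (\<phi> g y))
     \<and> (\<forall>g\<in>carrier G. \<forall>x y. E x y \<longrightarrow> \<not> (\<phi> g x = y \<and> \<phi> g y = x))"

definition acylindrical ::
  "('a, 'b) monoid_scheme \<Rightarrow> 'v set \<Rightarrow> ('v \<Rightarrow> 'v \<Rightarrow> bool) \<Rightarrow> ('a \<Rightarrow> 'v \<Rightarrow> 'v) \<Rightarrow> bool" where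
  "acylindrical G V E \<phi> \<longleftrightarrow>
     (\<forall>\<epsilon>::real. \<epsilon> \<ge> 0 \<longrightarrow> (\<exists>(R::real) (N::nat). \<forall>x\<in>V. \<forall>y\<in>V. real (tdist E x y) \<ge> R \<longrightarrow>
        (let S = {g \<in> carrier G. real (tdist E x (\<phi> g x)) \<le> \<epsilon> \<and> real (tdist E y (\<phi> g y)) \<le> \<epsilon>}
         in finite S \<and> card S \<le> N)))"

text \<open>Loxodromic: positive stable translation length, i.e. the orbit map n \<mapsto> g^n x
  grows linearly.\<close>
definition loxodromic ::
  "('a, 'b) monoid_scheme \<Rightarrow> 'v set \<Rightarrow> ('v \<Rightarrow> 'v \<Rightarrow> bool) \<Rightarrow> ('a \<Rightarrow> 'v \<Rightarrow> 'v) \<Rightarrow> 'a \<Rightarrow> bool" where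
  "loxodromic G V E \<phi> g \<longleftrightarrow> g \<in> carrier G \<and>
     (\<exists>x\<in>V. \<exists>c::real. c > 0 \<and> (\<forall>n::nat. c * real n \<le> real (tdist E x (\<phi> (g [^]\<^bsub>G\<^esub> n) x))))"

text \<open>Independent loxodromics: the fixed points g^{\<plusminus>\<infinity>} and h^{\<plusminus>\<infinity>} on the boundary are
  pairwise distinct, expressed by boundedness of Gromov products of the orbit sequences.\<close>
definition indep_lox ::
  "('a, 'b) monoid_scheme \<Rightarrow> 'v set \<Rightarrow> ('v \<Rightarrow> 'v \<Rightarrow> bool) \<Rightarrow> ('a \<Rightarrow> 'v \<Rightarrow> 'v) \<Rightarrow> 'a \<Rightarrow> 'a \<Rightarrow> bool" where
  "indep_lox G V E \<phi> g h \<longleftrightarrow>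
     (\<exists>x\<in>V. \<exists>B::real. \<forall>g'\<in>{g, inv\<^bsub>G\<^esub> g}. \<forall>h'\<in>{h, inv\<^bsub>G\<^esub> h}. \<forall>(m::nat) (n::nat).
        gromov_prod E x (\<phi> (g' [^]\<^bsub>G\<^esub> m) x) (\<phi> (h' [^]\<^bsub>G\<^esub> n) x) \<le> B)"

definition non_elementary ::
  "('a, 'b) monoid_scheme \<Rightarrow> 'v set \<Rightarrow> ('v \<Rightarrow> 'v \<Rightarrow> bool) \<Rightarrow> ('a \<Rightarrow> 'v \<Rightarrow> 'v) \<Rightarrow> bool" where
  "non_elementary G V E \<phi> \<longleftrightarrow>
     (\<exists>L. L \<subseteq> carrier G \<and> infinite L \<and> (\<forall>g\<in>L. loxodromic G V E \<phi> g)
        \<and> (\<forall>g\<in>L. \<forall>h\<in>L. g \<noteq> h \<longrightarrow> indep_lox G V E \<phi> g h))"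

section \<open>The quotient graph of groups Gamma = T/G (Bass--Serre correspondence)\<close>

definition vorbit :: "('a, 'b) monoid_scheme \<Rightarrow> ('a \<Rightarrow> 'v \<Rightarrow> 'v) \<Rightarrow> 'v \<Rightarrow> 'v set" where
  "vorbit G \<phi> v = {\<phi> g v | g. g \<in> carrier G}"

definition eorbit :: "('a, 'b) monoid_scheme \<Rightarrow> ('a \<Rightarrow> 'v \<Rightarrow> 'v) \<Rightarrow> 'v \<Rightarrow> 'v \<Rightarrow> ('v \<times> 'v) set" where
  "eorbit G \<phi> a b = {(\<phi> g a, \<phi> g b) | g. g \<in> carrier G} \<union> {(\<phi> g b, \<phi> g a) | g. g \<in> carrier G}"

text \<open>Finite quotient graph: finitely many orbits of vertices and of edges.\<close>
definition cocompact ::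
  "('a, 'b) monoid_scheme \<Rightarrow> 'v set \<Rightarrow> ('v \<Rightarrow> 'v \<Rightarrow> bool) \<Rightarrow> ('a \<Rightarrow> 'v \<Rightarrow> 'v) \<Rightarrow> bool" where
  "cocompact G V E \<phi> \<longleftrightarrow> finite (vorbit G \<phi> ` V) \<and> finite ((\<lambda>(a, b). eorbit G \<phi> a b) ` {(a, b). E a b})"

definition comp_minus ::
  "('a, 'b) monoid_scheme \<Rightarrow> 'v set \<Rightarrow> ('v \<Rightarrow> 'v \<Rightarrow> bool) \<Rightarrow> ('a \<Rightarrow> 'v \<Rightarrow> 'v) \<Rightarrow> 'v \<Rightarrow> 'v \<Rightarrow> 'v \<Rightarrow> 'v set" where
  "comp_minus G V E \<phi> a b v =
     {w \<in> V. \<exists>xs. walk (\<lambda>x y. E x y \<and> (x, y) \<notin> eorbit G \<phi> a b) xs \<and> hd xs = v \<and> last xs = w}"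

definition setstab :: "('a, 'b) monoid_scheme \<Rightarrow> ('a \<Rightarrow> 'v \<Rightarrow> 'v) \<Rightarrow> 'v set \<Rightarrow> 'a set" where
  "setstab G \<phi> C = {g \<in> carrier G. \<phi> g ` C = C}"

definition edge_stab :: "('a, 'b) monoid_scheme \<Rightarrow> ('a \<Rightarrow> 'v \<Rightarrow> 'v) \<Rightarrow> 'v \<Rightarrow> 'v \<Rightarrow> 'a set" where
  "edge_stab G \<phi> a b = {g \<in> carrier G. \<phi> g a = a \<and> \<phi> g b = b}"

text \<open>The image e of the edge {a,b} in Gamma separates Gamma into exactly two components
  Gamma_a, Gamma_b iff the components C_a, C_b of T minus the orbit of {a,b} containing
  a and b lie in different G-orbits; then pi_1(Gamma_a) = Stab(C_a), pi_1(Gamma_b) = Stab(C_b)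
  and G_e = Stab({a,b}). The edge is contractible iff G_e equals one of the two factors.\<close>
definition contractible_edge ::
  "('a, 'b) monoid_scheme \<Rightarrow> 'v set \<Rightarrow> ('v \<Rightarrow> 'v \<Rightarrow> bool) \<Rightarrow> ('a \<Rightarrow> 'v \<Rightarrow> 'v) \<Rightarrow> 'v \<Rightarrow> 'v \<Rightarrow> bool" where
  "contractible_edge G V E \<phi> a b \<longleftrightarrow>
     (let Ca = comp_minus G V E \<phi> a b a; Cb = comp_minus G V E \<phi> a b b in
       (\<forall>g\<in>carrier G. \<phi> g ` Ca \<noteq> Cb)
       \<and> (edge_stab G \<phi> a b = setstab G \<phi> Ca \<or> edge_stab G \<phi> a b = setstab G \<phi> Cb))"

definition no_contractible_edges ::
  "('a, 'b) monoid_scheme \<Rightarrow> 'v set \<Rightarrow> ('v \<Rightarrow> 'v \<Rightarrow> bool) \<Rightarrow> ('a \<Rightarrow> 'v \<Rightarrow> 'v) \<Rightarrow> bool" where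
  "no_contractible_edges G V E \<phi> \<longleftrightarrow> (\<forall>a b. E a b \<longrightarrow> \<not> contractible_edge G V E \<phi> a b)"

end

theory Submission
  imports Defs
begin

(* A loxodromic element has no fixed vertex, so a vertex x of minimal displacement under it lies
   on its axis. For a finite generating set S, the translates of the geodesics from x to s x
   (s in S) form a G-invariant subtree with finitely many orbits of vertices and of edges; it is
   connected because S generates G. Distances in the subtree are those of T, so acylindricity,
   loxodromic elements and their independence carry over. Every edge of the subtree lies on a
   geodesic ending at a translate of x, i.e. at a vertex on the axis of some hyperbolic element.
   This rules out contractible edges: if e were contractible with G_e the stabiliser of the
   component C of the forest T - Ge on one side of e, then e would be the only edge leaving C, so
   an element translating along an axis through a vertex of C would map that vertex into C,
   stabilise C, and therefore fix e. *)

section \<open>Walks\<close>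

lemma walk_Nil [simp]: "\<not> walk E []"
  by (simp add: walk_def)

lemma walk_Cons [simp]: "walk E (x # xs) \<longleftrightarrow> xs = [] \<or> E x (hd xs) \<and> walk E xs"
proof (cases xs)
  case (Cons y ys)
  have "walk E (x # y # ys) \<longleftrightarrow> E x y \<and> walk E (y # ys)"
    unfolding walk_def by (auto simp: less_Suc_eq_0_disj)
  then show ?thesis using Cons by simp
qed (simp add: walk_def)

lemma walk_not_Nil: "walk E xs \<Longrightarrow> xs \<noteq> []"
  by (cases xs) simp_all

lemma walk_nth: "walk E xs \<Longrightarrow> Suc i < length xs \<Longrightarrow> E (xs ! i) (xs ! Suc i)"
  by (simp add: walk_def)

lemma walk_append:
  "walk E (xs @ ys) \<longleftrightarrow> (xs = [] \<longrightarrow> walk E ys) \<and> (ys = [] \<longrightarrow> walk E xs) \<and>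
     (xs \<noteq> [] \<and> ys \<noteq> [] \<longrightarrow> walk E xs \<and> walk E ys \<and> E (last xs) (hd ys))"
  by (induction xs) (auto simp: neq_Nil_conv dest: walk_not_Nil)

lemma walk_join:
  "walk E xs \<Longrightarrow> walk E ys \<Longrightarrow> last xs = hd ys \<Longrightarrow> walk E (xs @ tl ys)"
  by (cases ys) (auto simp: walk_append)

lemma last_join: "xs \<noteq> [] \<Longrightarrow> ys \<noteq> [] \<Longrightarrow> last xs = hd ys \<Longrightarrow> last (xs @ tl ys) = last ys"
  by (cases ys) (auto simp: last_tl)

lemma nth_join:
  assumes "xs \<noteq> []" "last xs = hd ys" "j < length ys"
  shows "(xs @ tl ys) ! (length xs - 1 + j) = ys ! j"
proof (cases j)
  case 0
  then show ?thesis using assms by (simp add: nth_append last_conv_nth hd_conv_nth)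
next
  case (Suc k)
  then have "length xs - 1 + j = length xs + k" using assms(1) by (cases xs) auto
  then have "(xs @ tl ys) ! (length xs - 1 + j) = tl ys ! k"
    by (simp only: nth_append_length_plus)
  then show ?thesis using Suc assms(3) by (simp add: nth_tl)
qed

lemma walk_rev: "symp E \<Longrightarrow> walk E xs \<Longrightarrow> walk E (rev xs)"
  by (induction xs) (auto simp: walk_append last_rev dest: sympD)

lemma walk_map:
  assumes "walk E xs" "\<And>x y. x \<in> set xs \<Longrightarrow> y \<in> set xs \<Longrightarrow> E x y \<Longrightarrow> E' (f x) (f y)"
  shows "walk E' (map f xs)"
  using assms by (induction xs) (auto simp: hd_map)

lemma walk_take: "walk E xs \<Longrightarrow> n > 0 \<Longrightarrow> walk E (take n xs)"
  by (induction xs arbitrary: n) (auto simp: take_Cons' neq_Nil_conv)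

lemma walk_drop: "walk E xs \<Longrightarrow> n < length xs \<Longrightarrow> walk E (drop n xs)"
  by (induction xs arbitrary: n) (auto simp: drop_Cons' neq_Nil_conv)

lemma walk_subset:
  "walk E xs \<Longrightarrow> (\<And>x y. E x y \<Longrightarrow> y \<in> V) \<Longrightarrow> hd xs \<in> V \<Longrightarrow> set xs \<subseteq> V"
  by (induction xs) auto

lemma rtranclp_iff_walk: "R\<^sup>*\<^sup>* x y \<longleftrightarrow> (\<exists>xs. walk R xs \<and> hd xs = x \<and> last xs = y)"
proof
  assume "R\<^sup>*\<^sup>* x y"
  then show "\<exists>xs. walk R xs \<and> hd xs = x \<and> last xs = y"
  proof (induction rule: converse_rtranclp_induct)
    case base
    show ?case by (intro exI[of _ "[y]"]) simp
  next
    case (step x z)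
    then obtain xs where "walk R xs" "hd xs = z" "last xs = y" by blast
    with step.hyps(1) show ?case by (intro exI[of _ "x # xs"]) auto
  qed
next
  assume "\<exists>xs. walk R xs \<and> hd xs = x \<and> last xs = y"
  then obtain xs where "walk R xs" "hd xs = x" "last xs = y" by blast
  then show "R\<^sup>*\<^sup>* x y"
    by (induction xs arbitrary: x) (auto intro: converse_rtranclp_into_rtranclp)
qed

lemma rtranclp_map:
  assumes "\<And>x y. R x y \<Longrightarrow> S (f x) (f y)" "R\<^sup>*\<^sup>* x y"
  shows "S\<^sup>*\<^sup>* (f x) (f y)"
  using assms(2) by (induction rule: rtranclp_induct) (auto intro: rtranclp.rtrancl_into_rtrancl assms(1))

lemma walk_rtranclp_nth:
  assumes "walk R xs" "k < length xs"
  shows "R\<^sup>*\<^sup>* (hd xs) (xs ! k)"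
proof -
  have "last (take (Suc k) xs) = xs ! k" using assms(2) by (simp add: take_Suc_conv_app_nth)
  moreover have "xs \<noteq> []" using assms(2) by auto
  ultimately show ?thesis
    unfolding rtranclp_iff_walk using walk_take[OF assms(1), of "Suc k"]
    by (intro exI[of _ "take (Suc k) xs"]) (simp add: hd_take)
qed

lemma simple_path_from_walk:
  assumes "walk E xs"
  shows "\<exists>ys. simple_path E (hd xs) (last xs) ys \<and> length ys \<le> length xs"
  using assms
proof (induction "length xs" arbitrary: xs rule: less_induct)
  case less
  show ?case
  proof (cases "distinct xs")
    case True
    then show ?thesis using less.prems by (auto simp: simple_path_def)
  next
    case False
    then obtain as y bs cs where xs: "xs = as @ [y] @ bs @ [y] @ cs"
      using not_distinct_decomp by blast
    let ?zs = "as @ [y] @ cs"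
    have "walk E (as @ [y])" "walk E ([y] @ cs)"
      using less.prems unfolding xs by (auto simp: walk_append)
    then have "walk E ?zs" using walk_join by fastforce
    moreover have "length ?zs < length xs" "hd ?zs = hd xs" "last ?zs = last xs"
      by (auto simp: xs hd_append)
    ultimately show ?thesis using less.hyps by fastforce
  qed
qed

lemma tdist_le_walk:
  assumes "walk E xs"
  shows "tdist E (hd xs) (last xs) \<le> length xs - 1"
  unfolding tdist_def using assms by (intro Least_le exI[of _ xs]) (cases xs; simp)

section \<open>Trees\<close>

definition geodesic :: "('v \<Rightarrow> 'v \<Rightarrow> bool) \<Rightarrow> 'v \<Rightarrow> 'v \<Rightarrow> 'v list" where
  "geodesic E x y = (THE xs. simple_path E x y xs)"

locale tree =
  fixes V :: "'v set" and E :: "'v \<Rightarrow> 'v \<Rightarrow> bool"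
  assumes is_tree: "is_tree V E"
begin

lemma edge_in_V: "E x y \<Longrightarrow> x \<in> V" "E x y \<Longrightarrow> y \<in> V"
  using is_tree unfolding is_tree_def by blast+

lemma symp_edge: "symp E"
  using is_tree unfolding is_tree_def symp_def by blast

lemma edge_sym: "E x y \<Longrightarrow> E y x"
  using symp_edge by (rule sympD)

lemma edge_irrefl: "\<not> E x x"
  using is_tree unfolding is_tree_def by blast

lemma V_nonempty: "V \<noteq> {}"
  using is_tree unfolding is_tree_def by blast

lemma simple_path_geodesic: "x \<in> V \<Longrightarrow> y \<in> V \<Longrightarrow> simple_path E x y (geodesic E x y)"
  unfolding geodesic_def using is_tree unfolding is_tree_def by (blast intro: theI')

lemma geodesic_unique: "simple_path E x y xs \<Longrightarrow> x \<in> V \<Longrightarrow> y \<in> V \<Longrightarrow> xs = geodesic E x y"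
  using is_tree simple_path_geodesic unfolding is_tree_def by blast

lemma simple_path_subset_V: "simple_path E x y xs \<Longrightarrow> x \<in> V \<Longrightarrow> set xs \<subseteq> V"
  unfolding simple_path_def using walk_subset[of E xs V] edge_in_V(2) by blast

lemma simple_path_end_in_V: "simple_path E x y xs \<Longrightarrow> x \<in> V \<Longrightarrow> y \<in> V"
  using simple_path_subset_V[of x y xs] unfolding simple_path_def
  by (auto dest!: walk_not_Nil)

lemma simple_path_rev: "simple_path E x y xs \<Longrightarrow> simple_path E y x (rev xs)"
  unfolding simple_path_def using walk_rev[OF symp_edge] by (auto simp: hd_rev last_rev)

lemma simple_path_take:
  assumes "simple_path E x y xs" "k < length xs"
  shows "simple_path E x (xs ! k) (take (Suc k) xs)"
proof -
  have "xs \<noteq> []" "last (take (Suc k) xs) = xs ! k"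
    using assms(2) by (auto simp: take_Suc_conv_app_nth)
  then show ?thesis
    using assms walk_take[of E xs "Suc k"] unfolding simple_path_def by (simp add: hd_take)
qed

lemma simple_path_drop:
  "simple_path E x y xs \<Longrightarrow> k < length xs \<Longrightarrow> simple_path E (xs ! k) y (drop k xs)"
  unfolding simple_path_def by (auto simp: walk_drop hd_drop_conv_nth)

lemma tdist_simple_path:
  assumes xs: "simple_path E x y xs" and x: "x \<in> V"
  shows "tdist E x y = length xs - 1"
proof (rule antisym)
  have xs': "walk E xs" "hd xs = x" "last xs = y" "xs \<noteq> []"
    using xs unfolding simple_path_def by (auto dest: walk_not_Nil)
  then show "tdist E x y \<le> length xs - 1"
    using tdist_le_walk[of E xs] by simp
  have "\<exists>ws. walk E ws \<and> hd ws = x \<and> last ws = y \<and> length ws = Suc (length xs - 1)"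
    using xs' by (intro exI[of _ xs]) simp
  then have "\<exists>ws. walk E ws \<and> hd ws = x \<and> last ws = y \<and> length ws = Suc (tdist E x y)"
    unfolding tdist_def by (rule LeastI)
  then obtain ws where ws: "walk E ws" "hd ws = x" "last ws = y" "length ws = Suc (tdist E x y)"
    by blast
  obtain ys where ys: "simple_path E x y ys" "length ys \<le> length ws"
    using simple_path_from_walk[OF ws(1)] ws(2,3) by blast
  have "y \<in> V" using simple_path_end_in_V[OF xs x] .
  then have "ys = xs" using geodesic_unique[OF ys(1) x] geodesic_unique[OF xs x] by simp
  then show "length xs - 1 \<le> tdist E x y" using ys(2) ws(4) by simp
qed

lemma simple_path_append:
  assumes W: "simple_path E x w W" and P: "simple_path E w z P" and x: "x \<in> V"
    and lW: "length W \<ge> 2" and lP: "length P \<ge> 2" and turn: "W ! (length W - 2) \<noteq> P ! 1"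
  shows "simple_path E x z (W @ tl P)"
proof -
  have w: "w \<in> V" using simple_path_end_in_V W x by blast
  have W': "walk E W" "hd W = x" "last W = w" "distinct W"
    and P': "walk E P" "hd P = w" "last P = z" "distinct P"
    using W P unfolding simple_path_def by auto
  have ne: "W \<noteq> []" "P \<noteq> []" using lW lP by auto
  have disj: "set W \<inter> set (tl P) = {}"
  proof (rule ccontr)
    assume "set W \<inter> set (tl P) \<noteq> {}"
    then obtain i k where i: "i < length W" and k: "k < length P - 1" and eq': "P ! Suc k = W ! i"
      by (auto simp: in_set_conv_nth nth_tl)
    define j where "j = Suc k"
    have j: "j < length P" "0 < j" and eq: "W ! i = P ! j" using k eq' unfolding j_def by auto
    have "P ! j \<noteq> P ! 0" using P'(4) j ne nth_eq_iff_index_eq[of P j 0] by auto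
    moreover have "W ! (length W - 1) = w" "P ! 0 = w" using W'(3) P'(2) ne by (simp_all add: last_conv_nth hd_conv_nth)
    ultimately have "i \<noteq> length W - 1" using eq by auto
    then have iW: "i < length W - 1" using i by linarith
    have Pj: "P ! j \<in> V" using simple_path_subset_V[OF P w] j by auto
    have "drop i W = geodesic E (P ! j) w"
      using geodesic_unique[OF simple_path_drop[OF W i] _ w] eq Pj by simp
    moreover have "rev (take (Suc j) P) = geodesic E (P ! j) w"
      using geodesic_unique[OF simple_path_rev[OF simple_path_take[OF P j(1)]] Pj w] P'(2) ne
      by (simp add: hd_conv_nth)
    ultimately have "drop i W = rev (take (Suc j) P)" by simp
    then have "rev (drop i W) ! 1 = take (Suc j) P ! 1" by simp
    moreover have "rev (drop i W) ! 1 = W ! (length W - 2)"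
      using iW by (simp add: rev_nth)
    ultimately show False using turn j by simp
  qed
  have "walk E (W @ tl P)" using walk_join[OF W'(1) P'(1)] W'(3) P'(2) by simp
  moreover have "hd (W @ tl P) = x" "last (W @ tl P) = z"
    using W'(2,3) P'(2,3) last_join[of W P] ne by auto
  moreover have "distinct (W @ tl P)" using W'(4) P'(4) disj by (simp add: distinct_tl)
  ultimately show ?thesis unfolding simple_path_def by simp
qed

lemma tdist_geodesic: "x \<in> V \<Longrightarrow> y \<in> V \<Longrightarrow> tdist E x y = length (geodesic E x y) - 1"
  using tdist_simple_path simple_path_geodesic by blast

lemma tdist_self [simp]: "tdist E x x = 0"
  using tdist_le_walk[of E "[x]"] by simp

lemma tdist_commute:
  assumes "x \<in> V" "y \<in> V"
  shows "tdist E x y = tdist E y x"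
proof -
  have "simple_path E y x (rev (geodesic E x y))"
    using simple_path_rev[OF simple_path_geodesic[OF assms]] .
  then show ?thesis using tdist_simple_path tdist_geodesic assms by simp
qed

lemma tdist_eq_0_iff:
  assumes "x \<in> V" "y \<in> V"
  shows "tdist E x y = 0 \<longleftrightarrow> x = y"
proof
  assume "tdist E x y = 0"
  let ?P = "geodesic E x y"
  have P: "simple_path E x y ?P" using simple_path_geodesic[OF assms] .
  then have "?P \<noteq> []" "length ?P - 1 = 0"
    using \<open>tdist E x y = 0\<close> tdist_geodesic[OF assms] unfolding simple_path_def
    by (auto dest: walk_not_Nil)
  then obtain z where "?P = [z]" by (cases ?P) auto
  then show "x = y" using P unfolding simple_path_def by auto
qed simp

lemma tdist_triangle:
  assumes "x \<in> V" "y \<in> V" "z \<in> V"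
  shows "tdist E x z \<le> tdist E x y + tdist E y z"
proof -
  let ?P = "geodesic E x y" and ?Q = "geodesic E y z"
  have P: "simple_path E x y ?P" and Q: "simple_path E y z ?Q"
    using simple_path_geodesic assms by auto
  then have ne: "?P \<noteq> []" "?Q \<noteq> []" unfolding simple_path_def by (auto dest: walk_not_Nil)
  have "walk E (?P @ tl ?Q)" using P Q unfolding simple_path_def by (auto intro: walk_join)
  then have "tdist E (hd (?P @ tl ?Q)) (last (?P @ tl ?Q)) \<le> length (?P @ tl ?Q) - 1"
    by (rule tdist_le_walk)
  moreover have "hd (?P @ tl ?Q) = x" "last (?P @ tl ?Q) = z"
    using P Q ne last_join[of ?P ?Q] unfolding simple_path_def by auto
  ultimately show ?thesis using ne tdist_geodesic assms by simp
qed

lemma tdist_through: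
  assumes "simple_path E x y xs" "x \<in> V" "k < length xs"
  shows "tdist E x (xs ! k) = k" "tdist E (xs ! k) y = length xs - 1 - k"
    "tdist E x y = tdist E x (xs ! k) + tdist E (xs ! k) y"
proof -
  have "xs ! k \<in> V" using simple_path_subset_V[OF assms(1,2)] assms(3) by auto
  then show "tdist E x (xs ! k) = k" "tdist E (xs ! k) y = length xs - 1 - k"
    using tdist_simple_path[OF simple_path_take[OF assms(1,3)] assms(2)]
      tdist_simple_path[OF simple_path_drop[OF assms(1,3)]] assms(3) by simp_all
  then show "tdist E x y = tdist E x (xs ! k) + tdist E (xs ! k) y"
    using tdist_simple_path[OF assms(1,2)] assms(3) by simp
qed

lemma gromov_prod_perturb:
  assumes V: "x \<in> V" "y \<in> V" "p \<in> V" "p' \<in> V" "q \<in> V" "q' \<in> V"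
    and D: "tdist E x y \<le> D" "tdist E p p' \<le> D" "tdist E q q' \<le> D"
  shows "gromov_prod E y p' q' \<le> gromov_prod E x p q + 3 * D"
proof -
  have "tdist E y p' \<le> tdist E y x + tdist E x p'" "tdist E x p' \<le> tdist E x p + tdist E p p'"
    "tdist E y q' \<le> tdist E y x + tdist E x q'" "tdist E x q' \<le> tdist E x q + tdist E q q'"
    "tdist E p q \<le> tdist E p p' + tdist E p' q" "tdist E p' q \<le> tdist E p' q' + tdist E q' q"
    using tdist_triangle V by blast+
  moreover have "tdist E y x = tdist E x y" "tdist E q' q = tdist E q q'"
    using tdist_commute V by auto
  ultimately have "tdist E y p' + tdist E y q' + tdist E p q
      \<le> tdist E x p + tdist E x q + tdist E p' q' + 6 * D"
    using D by linarith
  then have "real (tdist E y p') + real (tdist E y q') + real (tdist E p q)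
      \<le> real (tdist E x p) + real (tdist E x q) + real (tdist E p' q') + 6 * real D"
    by (metis of_nat_add of_nat_le_iff of_nat_mult of_nat_numeral)
  then show ?thesis unfolding gromov_prod_def by (simp only: of_nat_mult of_nat_numeral) argo
qed

end

section \<open>Group actions on trees\<close>

locale tree_group_action = group G for G (structure) +
  fixes V :: "'v set" and E :: "'v \<Rightarrow> 'v \<Rightarrow> bool" and \<phi> :: "'a \<Rightarrow> 'v \<Rightarrow> 'v"
  assumes tree_action: "tree_action G V E \<phi>"

sublocale tree_group_action \<subseteq> tree V E
  using tree_action unfolding tree_action_def tree_def by blast

sublocale tree_group_action \<subseteq> group_action G V \<phi>
  using tree_action unfolding tree_action_def by blast

context tree_group_action
begin

lemma act_in_V: "g \<in> carrier G \<Longrightarrow> v \<in> V \<Longrightarrow> \<phi> g v \<in> V"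
  using element_image by blast

lemma act_edge: "g \<in> carrier G \<Longrightarrow> E x y \<Longrightarrow> E (\<phi> g x) (\<phi> g y)"
  using tree_action edge_in_V unfolding tree_action_def by blast

lemma act_no_inversion: "g \<in> carrier G \<Longrightarrow> E x y \<Longrightarrow> \<phi> g x = y \<Longrightarrow> \<phi> g y \<noteq> x"
  using tree_action unfolding tree_action_def by blast

lemma act_inj_iff: "g \<in> carrier G \<Longrightarrow> x \<in> V \<Longrightarrow> y \<in> V \<Longrightarrow> \<phi> g x = \<phi> g y \<longleftrightarrow> x = y"
  using inj_prop by (meson inj_on_eq_iff)

lemma act_mult: "g \<in> carrier G \<Longrightarrow> h \<in> carrier G \<Longrightarrow> v \<in> V \<Longrightarrow> \<phi> (g \<otimes> h) v = \<phi> g (\<phi> h v)"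
  using composition_rule by blast

lemma act_one: "v \<in> V \<Longrightarrow> \<phi> \<one> v = v"
  using id_eq_one by (metis restrict_apply')

lemma act_inv_act: "g \<in> carrier G \<Longrightarrow> v \<in> V \<Longrightarrow> \<phi> (inv g) (\<phi> g v) = v"
  using orbit_sym_aux by blast

lemma act_act_inv: "g \<in> carrier G \<Longrightarrow> v \<in> V \<Longrightarrow> \<phi> g (\<phi> (inv g) v) = v"
  using act_inv_act[of "inv g" v] by simp

lemma act_pow_Suc: "g \<in> carrier G \<Longrightarrow> v \<in> V \<Longrightarrow> \<phi> (g [^] Suc n) v = \<phi> (g [^] n) (\<phi> g v)"
  by (simp add: act_mult)

lemma act_pow_fixed: "h \<in> carrier G \<Longrightarrow> v \<in> V \<Longrightarrow> \<phi> h v = v \<Longrightarrow> \<phi> (h [^] (k::nat)) v = v"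
  by (induction k) (auto simp: act_one act_mult)

lemma act_image_inv_image: "g \<in> carrier G \<Longrightarrow> X \<subseteq> V \<Longrightarrow> \<phi> (inv g) ` \<phi> g ` X = X"
  by (force simp: image_image act_inv_act subset_iff)

lemma simple_path_act:
  assumes "simple_path E x y P" "x \<in> V" "g \<in> carrier G"
  shows "simple_path E (\<phi> g x) (\<phi> g y) (map (\<phi> g) P)"
proof -
  have "set P \<subseteq> V" using simple_path_subset_V assms by blast
  then have "inj_on (\<phi> g) (set P)" unfolding inj_on_def using act_inj_iff[OF assms(3)] by blast
  moreover have "walk E (map (\<phi> g) P)" using assms walk_map act_edge unfolding simple_path_def by blast
  ultimately show ?thesis
    using assms(1) unfolding simple_path_def by (auto simp: hd_map last_map distinct_map dest: walk_not_Nil)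
qed

lemma tdist_act: "g \<in> carrier G \<Longrightarrow> x \<in> V \<Longrightarrow> y \<in> V \<Longrightarrow> tdist E (\<phi> g x) (\<phi> g y) = tdist E x y"
  using tdist_simple_path[OF simple_path_act[OF simple_path_geodesic]] tdist_geodesic act_in_V by simp

lemma act_orbit_shift:
  assumes "g \<in> carrier G" "h \<in> carrier G" "v \<in> V"
  shows "\<phi> h (\<phi> g v) = \<phi> (h \<otimes> g) v" "\<phi> h v = \<phi> (h \<otimes> inv g) (\<phi> g v)"
  using assms by (simp_all add: act_mult act_act_inv act_inv_act act_in_V)

lemma vorbit_act: "g \<in> carrier G \<Longrightarrow> v \<in> V \<Longrightarrow> vorbit G \<phi> (\<phi> g v) = vorbit G \<phi> v"
  unfolding vorbit_def using act_orbit_shift by (blast intro: m_closed inv_closed)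

lemma eorbit_act:
  assumes g: "g \<in> carrier G" and a: "a \<in> V" and b: "b \<in> V"
  shows "eorbit G \<phi> (\<phi> g a) (\<phi> g b) = eorbit G \<phi> a b"
proof (intro equalityI subsetI)
  fix p assume "p \<in> eorbit G \<phi> (\<phi> g a) (\<phi> g b)"
  then obtain h where h: "h \<in> carrier G"
    and "p = (\<phi> h (\<phi> g a), \<phi> h (\<phi> g b)) \<or> p = (\<phi> h (\<phi> g b), \<phi> h (\<phi> g a))"
    unfolding eorbit_def by blast
  then have "p = (\<phi> (h \<otimes> g) a, \<phi> (h \<otimes> g) b) \<or> p = (\<phi> (h \<otimes> g) b, \<phi> (h \<otimes> g) a)"
    using act_orbit_shift(1)[OF g h] a b by simp
  moreover have "h \<otimes> g \<in> carrier G" using g h by simp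
  ultimately show "p \<in> eorbit G \<phi> a b" unfolding eorbit_def by blast
next
  fix p assume "p \<in> eorbit G \<phi> a b"
  then obtain h where h: "h \<in> carrier G" and "p = (\<phi> h a, \<phi> h b) \<or> p = (\<phi> h b, \<phi> h a)"
    unfolding eorbit_def by blast
  then have "p = (\<phi> (h \<otimes> inv g) (\<phi> g a), \<phi> (h \<otimes> inv g) (\<phi> g b))
      \<or> p = (\<phi> (h \<otimes> inv g) (\<phi> g b), \<phi> (h \<otimes> inv g) (\<phi> g a))"
    using act_orbit_shift(2)[OF g h] a b by simp
  moreover have "h \<otimes> inv g \<in> carrier G" using g h by simp
  ultimately show "p \<in> eorbit G \<phi> (\<phi> g a) (\<phi> g b)" unfolding eorbit_def by blast
qed

(* If P and its translate by g meet at g x without backtracking, the translates of P by powers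
   of g concatenate to geodesics. *)
lemma simple_path_pow_no_backtracking:
  assumes g: "g \<in> carrier G" and x: "x \<in> V" and P: "simple_path E x (\<phi> g x) P"
    and len: "length P = Suc \<tau>" and \<tau>: "0 < \<tau>" and turn: "\<phi> g (P ! 1) \<noteq> P ! (\<tau> - 1)"
  shows "\<exists>W. simple_path E x (\<phi> (g [^] Suc m) x) W \<and> length W = Suc m * \<tau> + 1
    \<and> W ! (Suc m * \<tau> - 1) = \<phi> (g [^] m) (P ! (\<tau> - 1))"
proof (induction m)
  case 0
  have "P ! (\<tau> - 1) \<in> V" using simple_path_subset_V[OF P x] len by auto
  then show ?case using P len g by (intro exI[of _ P]) (simp add: act_one)
next
  case (Suc m)
  then obtain W where W: "simple_path E x (\<phi> (g [^] Suc m) x) W" "length W = Suc m * \<tau> + 1"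
    "W ! (Suc m * \<tau> - 1) = \<phi> (g [^] m) (P ! (\<tau> - 1))" by blast
  let ?h = "g [^] Suc m"
  have PV: "P ! 1 \<in> V" "P ! (\<tau> - 1) \<in> V" using simple_path_subset_V[OF P x] len \<tau> by auto
  define Q where "Q = map (\<phi> ?h) P"
  have "simple_path E (\<phi> ?h x) (\<phi> ?h (\<phi> g x)) Q"
    unfolding Q_def using simple_path_act[OF P x nat_pow_closed[OF g]] .
  then have Q: "simple_path E (\<phi> ?h x) (\<phi> (g [^] Suc (Suc m)) x) Q"
    unfolding act_pow_Suc[OF g x, symmetric] .
  have Q1: "Q ! 1 = \<phi> (g [^] m) (\<phi> g (P ! 1))"
    unfolding Q_def using len \<tau> act_pow_Suc[OF g PV(1)] by simp
  have lW: "2 \<le> length W" using W(2) \<tau> by simp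
  have "W ! (length W - 2) \<noteq> Q ! 1"
    using W(2,3) Q1 act_inj_iff[of "g [^] m"] g PV act_in_V turn by simp
  then have "simple_path E x (\<phi> (g [^] Suc (Suc m)) x) (W @ tl Q)"
    using simple_path_append[OF W(1) Q x lW] len \<tau> unfolding Q_def by simp
  moreover have "length (W @ tl Q) = Suc (Suc m) * \<tau> + 1" using W(2) len unfolding Q_def by simp
  moreover have "(W @ tl Q) ! (Suc (Suc m) * \<tau> - 1) = Q ! (\<tau> - 1)"
  proof -
    have "Suc (Suc m) * \<tau> - 1 = length W - 1 + (\<tau> - 1)" using W(2) \<tau> by simp
    moreover have "last W = hd Q" "W \<noteq> []" using W(1) Q unfolding simple_path_def by auto
    ultimately show ?thesis using nth_join[of W Q "\<tau> - 1"] len unfolding Q_def by simp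
  qed
  ultimately show ?case unfolding Q_def using len by auto
qed

lemma tdist_pow_no_backtracking:
  assumes "g \<in> carrier G" "x \<in> V" "simple_path E x (\<phi> g x) P"
    and "length P = Suc \<tau>" "0 < \<tau>" "\<phi> g (P ! 1) \<noteq> P ! (\<tau> - 1)"
  shows "tdist E x (\<phi> (g [^] n) x) = n * \<tau>"
proof (cases n)
  case (Suc m)
  then show ?thesis
    using simple_path_pow_no_backtracking[OF assms, of m] tdist_simple_path assms(2) by auto
qed (simp add: act_one assms(2))

(* A vertex of minimal displacement lies on an axis: backtracking at g x would give either an
   inversion or a vertex of smaller displacement. *)
lemma hyperbolic_axis:
  assumes g: "g \<in> carrier G" and free: "\<forall>v\<in>V. \<phi> g v \<noteq> v"
  shows "\<exists>x\<in>V. \<exists>\<tau>>0. \<forall>n. tdist E x (\<phi> (g [^] n) x) = n * \<tau>"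
proof -
  obtain x where x: "x \<in> V" and min: "\<And>v. v \<in> V \<Longrightarrow> tdist E x (\<phi> g x) \<le> tdist E v (\<phi> g v)"
    using ex_has_least_nat[of "\<lambda>v. v \<in> V" _ "\<lambda>v. tdist E v (\<phi> g v)"] V_nonempty by blast
  define \<tau> where "\<tau> = tdist E x (\<phi> g x)"
  define P where "P = geodesic E x (\<phi> g x)"
  have gx: "\<phi> g x \<in> V" using act_in_V g x by blast
  have P: "simple_path E x (\<phi> g x) P" unfolding P_def using simple_path_geodesic x gx by blast
  have \<tau>: "0 < \<tau>" unfolding \<tau>_def using tdist_eq_0_iff[OF x gx] free x by auto
  have len: "length P = Suc \<tau>"
    using tdist_simple_path[OF P x] \<tau> unfolding \<tau>_def by simp
  have "P \<noteq> []" using len by auto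
  then have P0: "P ! 0 = x" and P\<tau>: "P ! \<tau> = \<phi> g x"
    using P len unfolding simple_path_def by (simp_all add: hd_conv_nth last_conv_nth)
  have turn: "\<phi> g (P ! 1) \<noteq> P ! (\<tau> - 1)"
  proof
    assume backtrack: "\<phi> g (P ! 1) = P ! (\<tau> - 1)"
    show False
    proof (cases "\<tau> = 1")
      case True
      then have "E x (\<phi> g x)" using walk_nth[of E P 0] P len P0 P\<tau> unfolding simple_path_def by simp
      then show False using act_no_inversion[OF g] backtrack True P0 P\<tau> by simp
    next
      case False
      then have \<tau>2: "2 \<le> \<tau>" using \<tau> by simp
      have P1: "simple_path E (P ! 1) (\<phi> g x) (drop 1 P)" using simple_path_drop[OF P, of 1] len \<tau> by simp
      have P1V: "P ! 1 \<in> V" using simple_path_subset_V[OF P x] len \<tau> by auto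
      have "Suc (\<tau> - 2) = \<tau> - 1" using \<tau>2 by simp
      then have "drop 1 P ! (\<tau> - 2) = P ! (\<tau> - 1)" using \<tau>2 len by simp
      then have "tdist E (P ! 1) (\<phi> g (P ! 1)) = \<tau> - 2"
        using tdist_through(1)[OF P1 P1V, of "\<tau> - 2"] backtrack \<tau>2 len by simp
      then show False using min[OF P1V] \<tau> unfolding \<tau>_def by simp
    qed
  qed
  show ?thesis using tdist_pow_no_backtracking[OF g x P len \<tau> turn] x \<tau> by blast
qed

lemma tdist_displacement_le_fixed:
  assumes k: "k \<in> carrier G" and y: "y \<in> V" and a: "a \<in> V" and fixed: "\<phi> k a = a"
  shows "tdist E y (\<phi> k y) \<le> 2 * tdist E y a"
proof -
  have "tdist E a (\<phi> k y) = tdist E a y" using tdist_act[OF k a y] fixed by simp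
  then show ?thesis
    using tdist_triangle[OF y a act_in_V[OF k y]] tdist_commute[OF y a] by simp
qed

lemma tdist_inv_pow:
  assumes l: "l \<in> carrier G" and y: "y \<in> V"
  shows "tdist E y (\<phi> (inv l [^] n) y) = tdist E y (\<phi> (l [^] (n::nat)) y)"
proof -
  let ?h = "l [^] n"
  have h: "?h \<in> carrier G" using l by simp
  have "tdist E y (\<phi> (inv ?h) y) = tdist E (\<phi> ?h y) y"
    using tdist_act[OF h y act_in_V[OF _ y], of "inv ?h"] act_act_inv[OF h y] h by simp
  then show ?thesis using nat_pow_inv[OF l] tdist_commute[OF y act_in_V[OF h y]] by simp
qed

lemma loxodromic_fixed_point_free:
  assumes lox: "loxodromic G V E \<phi> g" and v: "v \<in> V" and n: "0 < (n::nat)"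
  shows "\<phi> (g [^] n) v \<noteq> v"
proof
  assume fixed: "\<phi> (g [^] n) v = v"
  obtain x c where g: "g \<in> carrier G" and x: "x \<in> V" and c: "c > 0"
    and growth: "\<forall>m::nat. c * real m \<le> real (tdist E x (\<phi> (g [^] m) x))"
    using lox unfolding loxodromic_def by blast
  define d where "d = tdist E x v"
  have bounded: "tdist E x (\<phi> (g [^] (n * k)) x) \<le> 2 * d" for k
  proof -
    have "\<phi> (g [^] (n * k)) v = v"
      using act_pow_fixed[OF _ v fixed, of k] g by (simp add: nat_pow_pow)
    then show ?thesis
      using tdist_displacement_le_fixed[OF _ x v] g unfolding d_def by simp
  qed
  obtain k :: nat where k: "real (2 * d) / c < real k" using reals_Archimedean2 by blast
  have "k \<le> n * k" using n by simp
  then have "c * real k \<le> c * real (n * k)" using c by (simp only: mult_left_mono of_nat_mono less_imp_le)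
  also have "\<dots> \<le> real (2 * d)" using growth bounded[of k] by (meson of_nat_le_iff order_trans)
  finally show False using k c by (simp add: field_simps)
qed

lemma loxodromic_growth_at:
  assumes lox: "loxodromic G V E \<phi> g" and y: "y \<in> V"
  shows "\<exists>c>0. \<forall>n::nat. c * real n \<le> real (tdist E y (\<phi> (g [^] n) y))"
proof -
  obtain x c where g: "g \<in> carrier G" and x: "x \<in> V" and c: "c > 0"
    and growth: "\<forall>m::nat. c * real m \<le> real (tdist E x (\<phi> (g [^] m) x))"
    using lox unfolding loxodromic_def by blast
  define D where "D = real (tdist E x y)"
  \<comment> \<open>the displacement d of g^n at y satisfies d \<ge> max 1 (c n - 2 D) \<ge> c n / (2 D + 1)\<close>
  have "c / (2 * D + 1) * real n \<le> real (tdist E y (\<phi> (g [^] n) y))" for n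
  proof (cases "n = 0")
    case False
    have gn: "g [^] n \<in> carrier G" using g by simp
    define d where "d = real (tdist E y (\<phi> (g [^] n) y))"
    have "\<phi> (g [^] n) y \<noteq> y" using loxodromic_fixed_point_free[OF lox y] False by simp
    then have d1: "1 \<le> d"
      unfolding d_def using tdist_eq_0_iff[OF y act_in_V[OF gn y]] by simp
    have "tdist E x (\<phi> (g [^] n) x)
        \<le> tdist E x y + tdist E y (\<phi> (g [^] n) y) + tdist E (\<phi> (g [^] n) y) (\<phi> (g [^] n) x)"
      using tdist_triangle[OF x y act_in_V[OF gn x]]
        tdist_triangle[OF y act_in_V[OF gn y] act_in_V[OF gn x]] by simp
    also have "tdist E (\<phi> (g [^] n) y) (\<phi> (g [^] n) x) = tdist E x y"
      using tdist_act[OF gn y x] tdist_commute[OF y x] by simp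
    finally have d2: "c * real n - 2 * D \<le> d"
      using growth[rule_format, of n] unfolding d_def D_def by linarith
    have D: "0 \<le> D" unfolding D_def by simp
    show ?thesis
    proof (cases "c * real n \<le> 2 * D + 1")
      case True
      then have "c / (2 * D + 1) * real n \<le> 1" using D by (simp add: field_simps)
      then show ?thesis using d1 unfolding d_def by linarith
    next
      case False
      then have "0 \<le> (2 * D) * (c * real n - (2 * D + 1))" using D by simp
      then have "c * real n \<le> (c * real n - 2 * D) * (2 * D + 1)" by (simp add: algebra_simps)
      then have "c / (2 * D + 1) * real n \<le> c * real n - 2 * D" using D by (simp add: field_simps)
      then show ?thesis using d2 unfolding d_def by linarith
    qed
  qed simp
  moreover have "0 < c / (2 * D + 1)" using c unfolding D_def by simp
  ultimately show ?thesis by blast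
qed

lemma indep_lox_bounded_at:
  assumes ind: "indep_lox G V E \<phi> g h" and g: "g \<in> carrier G" and h: "h \<in> carrier G"
    and y: "y \<in> V"
  shows "\<exists>B. \<forall>g'\<in>{g, inv g}. \<forall>h'\<in>{h, inv h}. \<forall>(m::nat) (n::nat).
    gromov_prod E y (\<phi> (g' [^] m) y) (\<phi> (h' [^] n) y) \<le> B"
proof -
  obtain x B where x: "x \<in> V" and B: "\<forall>g'\<in>{g, inv g}. \<forall>h'\<in>{h, inv h}. \<forall>(m::nat) (n::nat).
      gromov_prod E x (\<phi> (g' [^] m) x) (\<phi> (h' [^] n) x) \<le> B"
    using ind unfolding indep_lox_def by blast
  define D where "D = tdist E x y"
  have "gromov_prod E y (\<phi> (g' [^] m) y) (\<phi> (h' [^] n) y) \<le> B + 3 * D"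
    if g': "g' \<in> {g, inv g}" and h': "h' \<in> {h, inv h}" for g' h' and m n :: nat
  proof -
    have gm: "g' [^] m \<in> carrier G" and hn: "h' [^] n \<in> carrier G" using g' h' g h by auto
    have "tdist E (\<phi> (g' [^] m) x) (\<phi> (g' [^] m) y) \<le> D" "tdist E (\<phi> (h' [^] n) x) (\<phi> (h' [^] n) y) \<le> D"
      unfolding D_def using tdist_act gm hn x y by auto
    then have "gromov_prod E y (\<phi> (g' [^] m) y) (\<phi> (h' [^] n) y)
        \<le> gromov_prod E x (\<phi> (g' [^] m) x) (\<phi> (h' [^] n) x) + 3 * D"
      using gromov_prod_perturb[OF x y act_in_V[OF gm x] act_in_V[OF gm y] act_in_V[OF hn x]
          act_in_V[OF hn y]] unfolding D_def by simp
    moreover have "gromov_prod E x (\<phi> (g' [^] m) x) (\<phi> (h' [^] n) x) \<le> B" using B g' h' by blast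
    ultimately show ?thesis by simp
  qed
  then show ?thesis by blast
qed

definition axis_vertex :: "'v \<Rightarrow> bool" where
  "axis_vertex y \<longleftrightarrow> y \<in> V \<and>
     (\<exists>l\<in>carrier G. \<exists>\<tau>::nat. 0 < \<tau> \<and> (\<forall>n::nat. tdist E y (\<phi> (l [^] n) y) = n * \<tau>))"

lemma axis_vertex_act:
  assumes y: "axis_vertex y" and h: "h \<in> carrier G"
  shows "axis_vertex (\<phi> h y)"
proof -
  obtain l \<tau> where l: "l \<in> carrier G" and \<tau>: "0 < \<tau>" and yV: "y \<in> V"
    and translate: "\<forall>n::nat. tdist E y (\<phi> (l [^] n) y) = n * \<tau>"
    using y unfolding axis_vertex_def by blast
  define l' where "l' = h \<otimes> l \<otimes> inv h"
  have l': "l' \<in> carrier G" unfolding l'_def using h l by simp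
  have conj: "\<phi> (l' [^] n) (\<phi> h z) = \<phi> h (\<phi> (l [^] n) z)" if "z \<in> V" for n :: nat and z
    using that
  proof (induction n arbitrary: z)
    case (Suc n)
    have "\<phi> l' (\<phi> h z) = \<phi> h (\<phi> l z)"
      unfolding l'_def using h l Suc.prems by (simp add: act_mult act_inv_act act_in_V)
    then show ?case
      using Suc act_pow_Suc[OF l' act_in_V[OF h Suc.prems]] act_pow_Suc[OF l Suc.prems] act_in_V l
      by simp
  qed (simp add: act_one act_in_V h)
  have "tdist E (\<phi> h y) (\<phi> (l' [^] n) (\<phi> h y)) = n * \<tau>" for n :: nat
    using conj[OF yV] tdist_act[OF h yV act_in_V[OF _ yV]] translate l by simp
  then show ?thesis unfolding axis_vertex_def using act_in_V[OF h yV] l' \<tau> by blast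
qed

lemma non_elementary_axis_vertex:
  assumes "non_elementary G V E \<phi>"
  obtains x where "axis_vertex x"
proof -
  obtain L where "infinite L" "\<forall>g\<in>L. loxodromic G V E \<phi> g"
    using assms unfolding non_elementary_def by blast
  moreover have "L \<noteq> {}" using \<open>infinite L\<close> by auto
  then obtain g where "g \<in> L" by blast
  ultimately have lox: "loxodromic G V E \<phi> g" by blast
  then have g: "g \<in> carrier G" unfolding loxodromic_def by blast
  have "\<forall>v\<in>V. \<phi> g v \<noteq> v" using loxodromic_fixed_point_free[OF lox, of _ 1] g by simp
  then obtain x \<tau> where "x \<in> V" "0 < \<tau>" "\<forall>n::nat. tdist E x (\<phi> (g [^] n) x) = n * \<tau>"
    using hyperbolic_axis[OF g] by blast
  then have "axis_vertex x" unfolding axis_vertex_def using g by blast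
  then show ?thesis by (rule that)
qed

end

section \<open>Contractible edges\<close>

lemma eorbit_swap: "eorbit G \<phi> a b = eorbit G \<phi> b a"
  unfolding eorbit_def by blast

lemma comp_minus_swap: "comp_minus G V E \<phi> a b = comp_minus G V E \<phi> b a"
  unfolding comp_minus_def by (simp add: eorbit_swap)

lemma comp_minus_subset: "comp_minus G V E \<phi> a b v \<subseteq> V"
  unfolding comp_minus_def by blast

lemma edge_stab_swap: "edge_stab G \<phi> a b = edge_stab G \<phi> b a"
  unfolding edge_stab_def by blast

locale edge_cut = tree_group_action +
  fixes a b
  assumes edge: "E a b"
begin

abbreviation forest_edge where
  "forest_edge \<equiv> \<lambda>x y. E x y \<and> (x, y) \<notin> eorbit G \<phi> a b"

abbreviation component where
  "component \<equiv> comp_minus G V E \<phi> a b"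

lemma a_in_V: "a \<in> V" and b_in_V: "b \<in> V"
  using edge edge_in_V by auto

lemma eorbit_act_closed:
  assumes "g \<in> carrier G" "(x, y) \<in> eorbit G \<phi> a b"
  shows "(\<phi> g x, \<phi> g y) \<in> eorbit G \<phi> a b"
proof -
  obtain h where h: "h \<in> carrier G" "(x, y) = (\<phi> h a, \<phi> h b) \<or> (x, y) = (\<phi> h b, \<phi> h a)"
    using assms(2) unfolding eorbit_def by blast
  then have "(\<phi> g x, \<phi> g y) = (\<phi> (g \<otimes> h) a, \<phi> (g \<otimes> h) b)
      \<or> (\<phi> g x, \<phi> g y) = (\<phi> (g \<otimes> h) b, \<phi> (g \<otimes> h) a)"
    using act_mult[OF assms(1) h(1)] a_in_V b_in_V by auto
  moreover have "g \<otimes> h \<in> carrier G" using assms(1) h(1) by simp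
  ultimately show ?thesis unfolding eorbit_def by blast
qed

lemma forest_edge_act: "g \<in> carrier G \<Longrightarrow> forest_edge x y \<Longrightarrow> forest_edge (\<phi> g x) (\<phi> g y)"
  using act_edge eorbit_act_closed[of "inv g" "\<phi> g x" "\<phi> g y"] act_inv_act edge_in_V by auto

lemma symp_forest_edge: "symp forest_edge"
  using edge_sym unfolding symp_def eorbit_def by blast

lemma component_eq: "component v = {w \<in> V. forest_edge\<^sup>*\<^sup>* v w}"
  unfolding comp_minus_def rtranclp_iff_walk by blast

lemma component_refl: "v \<in> V \<Longrightarrow> v \<in> component v"
  unfolding component_eq by simp

lemma component_cong: "w \<in> component v \<Longrightarrow> component w = component v"
  using symp_forest_edge unfolding component_eq
  by (auto intro: rtranclp_trans dest: sympD[OF symp_rtranclp])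

lemma component_step:
  "w \<in> component v \<Longrightarrow> E w w' \<Longrightarrow> (w, w') \<notin> eorbit G \<phi> a b \<Longrightarrow> w' \<in> component v"
  unfolding component_eq using edge_in_V by (auto intro: rtranclp.rtrancl_into_rtrancl)

lemma component_act_subset: "g \<in> carrier G \<Longrightarrow> \<phi> g ` component v \<subseteq> component (\<phi> g v)"
  unfolding component_eq using rtranclp_map[of forest_edge forest_edge "\<phi> g"] forest_edge_act act_in_V
  by blast

lemma component_act:
  assumes g: "g \<in> carrier G" and v: "v \<in> V"
  shows "\<phi> g ` component v = component (\<phi> g v)"
proof
  show "\<phi> g ` component v \<subseteq> component (\<phi> g v)" using component_act_subset[OF g] .
  show "component (\<phi> g v) \<subseteq> \<phi> g ` component v"
  proof
    fix w assume w: "w \<in> component (\<phi> g v)"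
    then have "\<phi> (inv g) w \<in> component v"
      using component_act_subset[of "inv g" "\<phi> g v"] act_inv_act g v by auto
    moreover have "w = \<phi> g (\<phi> (inv g) w)"
      using w act_act_inv[OF g] unfolding component_eq by simp
    ultimately show "w \<in> \<phi> g ` component v" by blast
  qed
qed

end

(* A contractible edge, oriented so that G_e is the stabiliser of the component of b. *)
locale contracting_edge = edge_cut +
  assumes separated: "\<forall>g\<in>carrier G. \<phi> g ` component a \<noteq> component b"
    and stabilizer: "edge_stab G \<phi> a b = setstab G \<phi> (component b)"
begin

lemma component_subset_V: "component v \<subseteq> V"
  by (rule comp_minus_subset)

lemma a_notin_component_b: "a \<notin> component b"
proof
  assume "a \<in> component b"
  then have "component a = component b" by (rule component_cong)
  moreover have "\<phi> \<one> ` component a = component a"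
    using act_one component_subset_V by (simp add: subset_iff)
  ultimately show False using separated by auto
qed

lemma stabilizer_fixes_a: "k \<in> carrier G \<Longrightarrow> \<phi> k ` component b = component b \<Longrightarrow> \<phi> k a = a"
  using stabilizer unfolding setstab_def edge_stab_def by blast

lemma exit_edge:
  assumes u: "u \<in> component b" and uv: "E u v" and v: "v \<notin> component b"
  shows "u = b \<and> v = a"
proof -
  have "(u, v) \<in> eorbit G \<phi> a b" using component_step[OF u uv] v by blast
  then obtain g where g: "g \<in> carrier G" and "(u, v) = (\<phi> g a, \<phi> g b) \<or> (u, v) = (\<phi> g b, \<phi> g a)"
    unfolding eorbit_def by blast
  then consider "u = \<phi> g a" | "u = \<phi> g b" "v = \<phi> g a" by blast
  then show ?thesis
  proof cases
    case 1
    then have "\<phi> g ` component a = component b"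
      using component_act[OF g a_in_V] component_cong[OF u] by simp
    then show ?thesis using separated g by blast
  next
    case 2
    then have "\<phi> g ` component b = component b"
      using component_act[OF g b_in_V] component_cong[OF u] by simp
    then have "\<phi> g a = a \<and> \<phi> g b = b"
      using stabilizer g unfolding setstab_def edge_stab_def by blast
    then show ?thesis using 2 by simp
  qed
qed

lemma walk_leaving_component:
  "walk E xs \<Longrightarrow> hd xs \<in> component b \<Longrightarrow> last xs \<notin> component b
    \<Longrightarrow> \<exists>j. Suc j < length xs \<and> xs ! j = b \<and> xs ! Suc j = a"
proof (induction xs)
  case (Cons x xs)
  then have "xs \<noteq> []" by auto
  show ?case
  proof (cases "hd xs \<in> component b")
    case True
    then obtain j where "Suc j < length xs" "xs ! j = b" "xs ! Suc j = a"
      using Cons \<open>xs \<noteq> []\<close> by auto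
    then show ?thesis by (intro exI[of _ "Suc j"]) simp
  next
    case False
    then have "x = b \<and> hd xs = a" using exit_edge[of x "hd xs"] Cons.prems \<open>xs \<noteq> []\<close> by simp
    then show ?thesis using \<open>xs \<noteq> []\<close> by (intro exI[of _ 0]) (auto simp: hd_conv_nth)
  qed
qed simp

lemma tdist_leaving_component:
  assumes y: "y \<in> component b" and q: "q \<in> V" "q \<notin> component b"
  shows "tdist E y q = tdist E y a + tdist E a q"
proof -
  have yV: "y \<in> V" using y component_subset_V by blast
  let ?R = "geodesic E y q"
  have R: "simple_path E y q ?R" using simple_path_geodesic[OF yV q(1)] .
  then have "\<exists>j. Suc j < length ?R \<and> ?R ! j = b \<and> ?R ! Suc j = a"
    using walk_leaving_component[of ?R] y q unfolding simple_path_def by auto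
  then obtain j where "Suc j < length ?R" "?R ! Suc j = a" by blast
  then show ?thesis using tdist_through(3)[OF R yV] by fastforce
qed

(* b \<rightarrow> a is the only edge leaving C_b, so one of l y, inv l y stays in C_b; that translation then
   stabilises C_b and fixes a, contradicting the unbounded displacement of y. *)
lemma axis_vertex_notin_component_b: "axis_vertex y \<Longrightarrow> y \<notin> component b"
proof
  assume "axis_vertex y" and y: "y \<in> component b"
  then obtain l \<tau> where l: "l \<in> carrier G" and \<tau>: "0 < \<tau>" and yV: "y \<in> V"
    and translate: "\<And>n::nat. tdist E y (\<phi> (l [^] n) y) = n * \<tau>"
    unfolding axis_vertex_def by blast
  have translate': "tdist E y (\<phi> (inv l [^] n) y) = n * \<tau>" for n :: nat
    using tdist_inv_pow[OF l yV] translate by simp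
  have "\<phi> l y \<in> component b \<or> \<phi> (inv l) y \<in> component b"
  proof (rule ccontr)
    assume "\<not> ?thesis"
    then have "tdist E y (\<phi> l y) = tdist E y a + tdist E a (\<phi> l y)"
      "tdist E y (\<phi> (inv l) y) = tdist E y a + tdist E a (\<phi> (inv l) y)"
      using tdist_leaving_component[OF y] act_in_V l yV by auto
    moreover have "tdist E (\<phi> l y) (\<phi> (inv l) y) = 2 * \<tau>"
    proof -
      have "tdist E (\<phi> l y) (\<phi> (inv l) y) = tdist E (\<phi> l (\<phi> l y)) y"
        using tdist_act[OF l act_in_V[OF l yV] act_in_V[OF _ yV], of "inv l"] act_act_inv[OF l yV] l
        by simp
      also have "\<dots> = 2 * \<tau>"
        using translate[of 2] act_pow_Suc[OF l yV, of 1] tdist_commute[OF yV] act_in_V l yV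
        by (simp add: numeral_2_eq_2)
      finally show ?thesis .
    qed
    moreover have "tdist E (\<phi> l y) (\<phi> (inv l) y) \<le> tdist E a (\<phi> l y) + tdist E a (\<phi> (inv l) y)"
      using tdist_triangle[of "\<phi> l y" a "\<phi> (inv l) y"] tdist_commute[OF a_in_V] act_in_V l yV a_in_V
      by simp
    moreover have "tdist E y a \<noteq> 0"
      using tdist_eq_0_iff[OF yV a_in_V] y a_notin_component_b by auto
    ultimately show False using translate[of 1] translate'[of 1] l by simp
  qed
  then obtain k where k: "k \<in> carrier G" "\<phi> k y \<in> component b"
    and translate_k: "\<And>n::nat. tdist E y (\<phi> (k [^] n) y) = n * \<tau>"
    using l translate translate' by blast
  have "\<phi> k ` component b = component b"
    using component_act[OF k(1) yV] component_cong[OF y] component_cong[OF k(2)] by simp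
  then have "\<phi> (k [^] n) a = a" for n :: nat
    using stabilizer_fixes_a[OF k(1)] act_pow_fixed[OF k(1) a_in_V] by blast
  then have bounded: "tdist E y (\<phi> (k [^] n) y) \<le> 2 * tdist E y a" for n :: nat
    using tdist_displacement_le_fixed yV a_in_V k(1) by simp
  define n where "n = Suc (2 * tdist E y a)"
  have "n * \<tau> \<le> 2 * tdist E y a" using translate_k[of n] bounded[of n] by simp
  moreover have "n \<le> n * \<tau>" using \<tau> by simp
  ultimately show False unfolding n_def by simp
qed

lemma simple_path_crossing_ends_in_component_b:
  assumes P: "simple_path E p q P" and i: "Suc i < length P" "P ! i = a" "P ! Suc i = b"
  shows "q \<in> component b"
proof (rule ccontr)
  assume q: "q \<notin> component b"
  let ?D = "drop (Suc i) P"
  have "walk E ?D" "hd ?D \<in> component b" "last ?D \<notin> component b"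
    using P i q walk_drop component_refl[OF b_in_V] unfolding simple_path_def
    by (auto simp: hd_drop_conv_nth)
  then obtain j where j: "Suc j < length ?D" "?D ! j = b" "?D ! Suc j = a"
    using walk_leaving_component by blast
  have "distinct P" using P unfolding simple_path_def by blast
  moreover have "P ! (Suc i + j) = P ! Suc i" "Suc i + j < length P" using j(1,2) i by auto
  ultimately have "j = 0" using nth_eq_iff_index_eq[of P "Suc i + j" "Suc i"] i(1) by simp
  then have "P ! Suc (Suc i) = P ! i" using j i by simp
  then show False using \<open>distinct P\<close> j(1) i(1) by (simp add: nth_eq_iff_index_eq)
qed

end

lemma (in tree_group_action) contractible_edge_contracting:
  assumes ab: "E a b" and "contractible_edge G V E \<phi> a b"
  shows "contracting_edge G V E \<phi> a b \<or> contracting_edge G V E \<phi> b a"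
proof -
  have sep: "\<forall>g\<in>carrier G. \<phi> g ` comp_minus G V E \<phi> a b a \<noteq> comp_minus G V E \<phi> a b b"
    and stab: "edge_stab G \<phi> a b = setstab G \<phi> (comp_minus G V E \<phi> a b a)
      \<or> edge_stab G \<phi> a b = setstab G \<phi> (comp_minus G V E \<phi> a b b)"
    using assms(2) unfolding contractible_edge_def Let_def by auto
  have "\<forall>g\<in>carrier G. \<phi> g ` comp_minus G V E \<phi> a b b \<noteq> comp_minus G V E \<phi> a b a"
  proof (intro ballI notI)
    fix g assume g: "g \<in> carrier G" and "\<phi> g ` comp_minus G V E \<phi> a b b = comp_minus G V E \<phi> a b a"
    then have "\<phi> (inv g) ` comp_minus G V E \<phi> a b a = \<phi> (inv g) ` \<phi> g ` comp_minus G V E \<phi> a b b"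
      by simp
    also have "\<dots> = comp_minus G V E \<phi> a b b" using act_image_inv_image[OF g comp_minus_subset] .
    finally show False using sep g by auto
  qed
  with stab sep show ?thesis
  proof (elim disjE)
    assume "edge_stab G \<phi> a b = setstab G \<phi> (comp_minus G V E \<phi> a b a)"
      and "\<forall>g\<in>carrier G. \<phi> g ` comp_minus G V E \<phi> a b b \<noteq> comp_minus G V E \<phi> a b a"
    then have "contracting_edge G V E \<phi> b a"
    proof unfold_locales
      show "E b a" using edge_sym[OF ab] .
    qed (simp_all add: comp_minus_swap[of G V E \<phi> b a] edge_stab_swap[of G \<phi> b a])
    then show ?thesis ..
  next
    assume "edge_stab G \<phi> a b = setstab G \<phi> (comp_minus G V E \<phi> a b b)"
    then have "contracting_edge G V E \<phi> a b" using ab sep by unfold_locales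
    then show ?thesis ..
  qed
qed

lemma (in tree_group_action) no_contractible_edges_if_crossed_by_axis_paths:
  assumes crossing: "\<And>a b. E a b \<Longrightarrow>
    \<exists>p q P i. simple_path E p q P \<and> axis_vertex q \<and> Suc i < length P \<and> P ! i = a \<and> P ! Suc i = b"
  shows "no_contractible_edges G V E \<phi>"
  unfolding no_contractible_edges_def
proof (intro allI impI notI)
  have not_contracting: False if "contracting_edge G V E \<phi> u v" for u v
  proof -
    interpret contracting_edge G V E \<phi> u v by (rule that)
    obtain p q P i where "simple_path E p q P" "axis_vertex q" "Suc i < length P" "P ! i = u" "P ! Suc i = v"
      using crossing[OF edge] by blast
    then show False
      using simple_path_crossing_ends_in_component_b axis_vertex_notin_component_b by blast
  qed
  fix a b assume "E a b" "contractible_edge G V E \<phi> a b"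
  then show False using contractible_edge_contracting not_contracting by blast
qed

section \<open>Invariant subtrees coded by natural numbers\<close>

lemma vorbit_eq_image: "vorbit G \<phi> v = (\<lambda>g. \<phi> g v) ` carrier G"
  unfolding vorbit_def by blast

lemma eorbit_eq_image:
  "eorbit G \<phi> a b = (\<lambda>g. (\<phi> g a, \<phi> g b)) ` carrier G \<union> (\<lambda>g. (\<phi> g b, \<phi> g a)) ` carrier G"
  unfolding eorbit_def by blast

(* The conclusion asks for a tree on a set of natural numbers: a countable invariant subtree (M, F)
   is transported along the coding to_nat_on M. *)
locale invariant_subtree = tree_group_action +
  fixes M and F
  assumes subtree_edge: "F u v \<Longrightarrow> E u v \<and> u \<in> M \<and> v \<in> M"
    and symp_subtree_edge: "symp F"
    and subtree_edge_act: "g \<in> carrier G \<Longrightarrow> F u v \<Longrightarrow> F (\<phi> g u) (\<phi> g v)"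
    and subtree_act: "g \<in> carrier G \<Longrightarrow> u \<in> M \<Longrightarrow> \<phi> g u \<in> M"
    and subtree_connected: "u \<in> M \<Longrightarrow> v \<in> M \<Longrightarrow> F\<^sup>*\<^sup>* u v"
    and subtree_subset: "M \<subseteq> V"
    and subtree_countable: "countable M"
    and subtree_nonempty: "M \<noteq> {}"
begin

definition code where "code = to_nat_on M"
definition decode where "decode = from_nat_into M"
definition codes where "codes = code ` M"
definition code_edge where "code_edge n m \<longleftrightarrow> n \<in> codes \<and> m \<in> codes \<and> F (decode n) (decode m)"
definition code_act where "code_act g = (\<lambda>n\<in>codes. code (\<phi> g (decode n)))"

lemma decode_code [simp]: "u \<in> M \<Longrightarrow> decode (code u) = u"
  unfolding decode_def code_def using from_nat_into_to_nat_on[OF subtree_countable] .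

lemma code_in_codes [simp]: "u \<in> M \<Longrightarrow> code u \<in> codes"
  unfolding codes_def by blast

lemma codes_cases:
  assumes "n \<in> codes" obtains u where "u \<in> M" "n = code u"
  using assms unfolding codes_def by blast

lemma code_decode [simp]: "n \<in> codes \<Longrightarrow> code (decode n) = n"
  by (auto elim: codes_cases)

lemma decode_in_M: "n \<in> codes \<Longrightarrow> decode n \<in> M"
  by (auto elim: codes_cases)

lemma code_inj: "u \<in> M \<Longrightarrow> v \<in> M \<Longrightarrow> code u = code v \<longleftrightarrow> u = v"
  by (metis decode_code)

lemma code_edge_code [simp]: "u \<in> M \<Longrightarrow> v \<in> M \<Longrightarrow> code_edge (code u) (code v) \<longleftrightarrow> F u v"
  unfolding code_edge_def by simp

lemma code_edge_codes: "code_edge n m \<Longrightarrow> n \<in> codes \<and> m \<in> codes"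
  unfolding code_edge_def by blast

lemma code_act_code [simp]: "g \<in> carrier G \<Longrightarrow> u \<in> M \<Longrightarrow> code_act g (code u) = code (\<phi> g u)"
  unfolding code_act_def by simp

lemma code_act_in_codes: "g \<in> carrier G \<Longrightarrow> n \<in> codes \<Longrightarrow> code_act g n \<in> codes"
  by (auto elim: codes_cases simp: subtree_act)

lemma walk_code: "walk F xs \<Longrightarrow> walk code_edge (map code xs)"
  using walk_map[of F xs code_edge code] subtree_edge by simp

lemma simple_path_code:
  assumes "walk F xs" "distinct xs" "set xs \<subseteq> M"
  shows "simple_path code_edge (code (hd xs)) (code (last xs)) (map code xs)"
  using assms walk_code unfolding simple_path_def
  by (auto simp: hd_map last_map distinct_map inj_on_def code_inj subset_iff dest: walk_not_Nil)

lemma simple_path_decode: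
  assumes P: "simple_path code_edge n m ns" and n: "n \<in> codes"
  shows "simple_path E (decode n) (decode m) (map decode ns)" "map code (map decode ns) = ns"
proof -
  have ns: "walk code_edge ns" "hd ns = n" "last ns = m" "distinct ns" "ns \<noteq> []"
    using P unfolding simple_path_def by (auto dest: walk_not_Nil)
  have codes: "set ns \<subseteq> codes" using walk_subset[OF ns(1)] code_edge_codes ns(2) n by blast
  then show "map code (map decode ns) = ns"
    by (simp add: map_idI subset_iff)
  have "walk E (map decode ns)"
    using walk_map[OF ns(1), of E decode] subtree_edge unfolding code_edge_def by blast
  moreover have "inj_on decode (set ns)" using codes by (metis code_decode inj_onI subsetD)
  ultimately show "simple_path E (decode n) (decode m) (map decode ns)"
    using ns unfolding simple_path_def by (simp add: hd_map last_map distinct_map)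
qed

lemma is_tree_codes: "is_tree codes code_edge"
  unfolding is_tree_def
proof (intro conjI allI impI ballI)
  show "codes \<noteq> {}" using subtree_nonempty unfolding codes_def by blast
  show "code_edge n m \<Longrightarrow> n \<in> codes" "code_edge n m \<Longrightarrow> m \<in> codes" for n m
    using code_edge_codes by auto
  show "code_edge n m \<Longrightarrow> code_edge m n" for n m
    using symp_subtree_edge unfolding code_edge_def by (blast dest: sympD)
  show "\<not> code_edge n n" for n
    using subtree_edge edge_irrefl unfolding code_edge_def by blast
next
  fix n m assume n: "n \<in> codes" and m: "m \<in> codes"
  then obtain u v where u: "u \<in> M" "n = code u" and v: "v \<in> M" "m = code v" by (auto elim!: codes_cases)
  obtain xs where "walk F xs" "hd xs = u" "last xs = v"
    using subtree_connected[OF u(1) v(1)] unfolding rtranclp_iff_walk by blast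
  then have "walk code_edge (map code xs)" "hd (map code xs) = n" "last (map code xs) = m"
    using walk_code u v by (auto simp: hd_map last_map dest: walk_not_Nil)
  then obtain ns where ns: "simple_path code_edge n m ns"
    using simple_path_from_walk by metis
  show "\<exists>!ns. simple_path code_edge n m ns"
  proof (intro ex1I)
    show "simple_path code_edge n m ns" by (rule ns)
    fix ns' assume ns': "simple_path code_edge n m ns'"
    have "decode n \<in> V" "decode m \<in> V" using u v subtree_subset by auto
    then have "map decode ns' = map decode ns"
      using geodesic_unique simple_path_decode(1)[OF ns n] simple_path_decode(1)[OF ns' n] by metis
    then show "ns' = ns" using simple_path_decode(2)[OF ns n] simple_path_decode(2)[OF ns' n] by metis
  qed
qed

sublocale coded: tree codes code_edge
  by unfold_locales (rule is_tree_codes)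

lemma tdist_code [simp]: "u \<in> M \<Longrightarrow> v \<in> M \<Longrightarrow> tdist code_edge (code u) (code v) = tdist E u v"
  using coded.simple_path_geodesic[of "code u" "code v"]
    simple_path_decode[of "code u" "code v" "geodesic code_edge (code u) (code v)"]
    coded.tdist_geodesic tdist_simple_path subtree_subset by auto

lemma code_act_mult:
  assumes g: "g \<in> carrier G" and h: "h \<in> carrier G"
  shows "code_act (g \<otimes> h) = compose codes (code_act g) (code_act h)"
proof
  fix n show "code_act (g \<otimes> h) n = compose codes (code_act g) (code_act h) n"
  proof (cases "n \<in> codes")
    case True
    then obtain u where "u \<in> M" "n = code u" by (rule codes_cases)
    then show ?thesis using g h subtree_subset by (auto simp: compose_def act_mult subtree_act)
  qed (simp add: compose_def code_act_def)
qed

lemma code_act_Bij: "g \<in> carrier G \<Longrightarrow> code_act g \<in> Bij codes"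
  unfolding Bij_def
proof
  assume g: "g \<in> carrier G"
  show "code_act g \<in> extensional codes" unfolding code_act_def by simp
  show "code_act g \<in> {h. bij_betw h codes codes}"
    using code_act_in_codes g inv_closed
    by (auto intro!: bij_betw_byWitness[where f' = "code_act (inv g)"] elim!: codes_cases
        simp: subtree_act act_inv_act act_act_inv subtree_subset[THEN subsetD])
qed

lemma tree_action_codes: "tree_action G codes code_edge code_act"
  unfolding tree_action_def
proof (intro conjI ballI allI impI)
  show "is_tree codes code_edge" by (rule is_tree_codes)
  show "group_action G codes code_act"
    unfolding group_action_def group_hom_def group_hom_axioms_def
  proof (intro conjI)
    show "group G" by (rule is_group)
    show "group (BijGroup codes)" by (rule group_BijGroup)
    show "code_act \<in> hom G (BijGroup codes)"
      using code_act_Bij code_act_mult by (auto intro!: homI simp: BijGroup_def)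
  qed
next
  fix g n m assume g: "g \<in> carrier G" and "n \<in> codes" "m \<in> codes"
  then obtain u v where u: "u \<in> M" "n = code u" and v: "v \<in> M" "m = code v"
    by (auto elim!: codes_cases)
  then have "\<phi> (inv g) (\<phi> g u) = u" "\<phi> (inv g) (\<phi> g v) = v"
    using act_inv_act[OF g] subtree_subset by auto
  then show "code_edge n m \<longleftrightarrow> code_edge (code_act g n) (code_act g m)"
    using u v g subtree_edge_act[OF g, of u v] subtree_edge_act[of "inv g" "\<phi> g u" "\<phi> g v"]
    by (auto simp: subtree_act)
next
  fix g n m assume "g \<in> carrier G" "code_edge n m"
  then show "\<not> (code_act g n = m \<and> code_act g m = n)"
    using act_no_inversion subtree_edge code_edge_codes[of n m]
    by (auto elim!: codes_cases simp: subtree_act code_inj)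
qed

sublocale coded: tree_group_action G codes code_edge code_act
  by unfold_locales (rule tree_action_codes)

lemma acylindrical_codes:
  assumes "acylindrical G V E \<phi>"
  shows "acylindrical G codes code_edge code_act"
  unfolding acylindrical_def
proof (intro allI impI)
  fix \<epsilon> :: real assume "0 \<le> \<epsilon>"
  then obtain R N where RN: "\<forall>x\<in>V. \<forall>y\<in>V. R \<le> real (tdist E x y) \<longrightarrow>
      (let S = {g \<in> carrier G. real (tdist E x (\<phi> g x)) \<le> \<epsilon> \<and> real (tdist E y (\<phi> g y)) \<le> \<epsilon>}
       in finite S \<and> card S \<le> N)"
    using assms unfolding acylindrical_def by blast
  show "\<exists>R N. \<forall>x\<in>codes. \<forall>y\<in>codes. R \<le> real (tdist code_edge x y) \<longrightarrow>
      (let S = {g \<in> carrier G. real (tdist code_edge x (code_act g x)) \<le> \<epsilon>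
          \<and> real (tdist code_edge y (code_act g y)) \<le> \<epsilon>}
       in finite S \<and> card S \<le> N)"
  proof (intro exI ballI impI)
    fix n m assume "n \<in> codes" "m \<in> codes" and far: "R \<le> real (tdist code_edge n m)"
    then obtain u v where u: "u \<in> M" "n = code u" and v: "v \<in> M" "m = code v"
      by (auto elim!: codes_cases)
    then have "{g \<in> carrier G. real (tdist code_edge n (code_act g n)) \<le> \<epsilon>
          \<and> real (tdist code_edge m (code_act g m)) \<le> \<epsilon>}
        = {g \<in> carrier G. real (tdist E u (\<phi> g u)) \<le> \<epsilon> \<and> real (tdist E v (\<phi> g v)) \<le> \<epsilon>}"
      by (auto simp: subtree_act)
    moreover have "R \<le> real (tdist E u v)" using far u v tdist_code by simp
    ultimately show "let S = {g \<in> carrier G. real (tdist code_edge n (code_act g n)) \<le> \<epsilon>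
          \<and> real (tdist code_edge m (code_act g m)) \<le> \<epsilon>}
       in finite S \<and> card S \<le> N"
      using RN u v subtree_subset by auto
  qed
qed

lemma non_elementary_codes:
  assumes "non_elementary G V E \<phi>"
  shows "non_elementary G codes code_edge code_act"
proof -
  obtain L where L: "L \<subseteq> carrier G" "infinite L" "\<forall>g\<in>L. loxodromic G V E \<phi> g"
    "\<forall>g\<in>L. \<forall>h\<in>L. g \<noteq> h \<longrightarrow> indep_lox G V E \<phi> g h"
    using assms unfolding non_elementary_def by blast
  obtain u where u: "u \<in> M" using subtree_nonempty by blast
  have uV: "u \<in> V" using u subtree_subset by blast
  have "loxodromic G codes code_edge code_act g" if g: "g \<in> L" for g
  proof -
    obtain c where "c > 0" "\<forall>n::nat. c * real n \<le> real (tdist E u (\<phi> (g [^] n) u))"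
      using loxodromic_growth_at[OF _ uV] L g by blast
    then show ?thesis
      unfolding loxodromic_def using g L(1) u
      by (intro conjI bexI[of _ "code u"] exI[of _ c]) (auto simp: subtree_act)
  qed
  moreover have "indep_lox G codes code_edge code_act g h" if gh: "g \<in> L" "h \<in> L" "g \<noteq> h" for g h
  proof -
    have g: "g \<in> carrier G" and h: "h \<in> carrier G" using gh L(1) by auto
    have "indep_lox G V E \<phi> g h" using L(4) gh by blast
    then obtain B where B: "\<forall>g'\<in>{g, inv g}. \<forall>h'\<in>{h, inv h}. \<forall>(m::nat) (n::nat).
        gromov_prod E u (\<phi> (g' [^] m) u) (\<phi> (h' [^] n) u) \<le> B"
      using indep_lox_bounded_at[OF _ g h uV] by blast
    have "gromov_prod code_edge (code u) (code_act (g' [^] m) (code u)) (code_act (h' [^] n) (code u))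
        = gromov_prod E u (\<phi> (g' [^] m) u) (\<phi> (h' [^] n) u)"
      if "g' \<in> carrier G" "h' \<in> carrier G" for g' h' and m n :: nat
      using that u unfolding gromov_prod_def by (simp add: subtree_act)
    then show ?thesis unfolding indep_lox_def using B u g h
      by (intro bexI[of _ "code u"] exI[of _ B]) auto
  qed
  ultimately show ?thesis unfolding non_elementary_def using L(1,2) by blast
qed

lemma axis_vertex_code: "u \<in> M \<Longrightarrow> axis_vertex u \<Longrightarrow> coded.axis_vertex (code u)"
  unfolding axis_vertex_def coded.axis_vertex_def by (auto simp: subtree_act)

lemma cocompact_codes:
  assumes "finite (vorbit G \<phi> ` M)" "finite ((\<lambda>(u, v). eorbit G \<phi> u v) ` {(u, v). F u v})"
  shows "cocompact G codes code_edge code_act"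
proof -
  have "vorbit G code_act (code u) = code ` vorbit G \<phi> u" if "u \<in> M" for u
    using that by (simp add: vorbit_eq_image image_image cong: image_cong_simp)
  then have "vorbit G code_act ` codes = (`) code ` vorbit G \<phi> ` M"
    unfolding codes_def by (auto simp: image_image)
  moreover have "eorbit G code_act (code u) (code v) = map_prod code code ` eorbit G \<phi> u v"
    if "u \<in> M" "v \<in> M" for u v
    using that by (simp add: eorbit_eq_image image_Un image_image cong: image_cong_simp)
  then have "(\<lambda>(a, b). eorbit G code_act a b) ` {(a, b). code_edge a b}
      \<subseteq> (`) (map_prod code code) ` (\<lambda>(u, v). eorbit G \<phi> u v) ` {(u, v). F u v}"
    unfolding code_edge_def by (force elim!: codes_cases simp: decode_in_M)
  ultimately show ?thesis
    unfolding cocompact_def using assms finite_subset[OF _ finite_imageI] by auto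
qed

lemma no_contractible_edges_codes:
  assumes "\<And>u v. F u v \<Longrightarrow> \<exists>P i. walk F P \<and> distinct P \<and> set P \<subseteq> M \<and> axis_vertex (last P)
    \<and> Suc i < length P \<and> P ! i = u \<and> P ! Suc i = v"
  shows "no_contractible_edges G codes code_edge code_act"
proof (rule coded.no_contractible_edges_if_crossed_by_axis_paths)
  fix n m assume "code_edge n m"
  then obtain u v where uv: "u \<in> M" "v \<in> M" "n = code u" "m = code v" "F u v"
    unfolding code_edge_def by (auto elim!: codes_cases)
  then obtain P i where P: "walk F P" "distinct P" "set P \<subseteq> M" "axis_vertex (last P)"
    "Suc i < length P" "P ! i = u" "P ! Suc i = v"
    using assms by blast
  moreover have "last P \<in> M" using P(1,3) walk_not_Nil last_in_set by blast
  ultimately have "simple_path code_edge (code (hd P)) (code (last P)) (map code P)"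
    "coded.axis_vertex (code (last P))"
    using simple_path_code axis_vertex_code by auto
  then show "\<exists>p q P i. simple_path code_edge p q P \<and> coded.axis_vertex q \<and> Suc i < length P
      \<and> P ! i = n \<and> P ! Suc i = m"
    using P uv by (intro exI[of _ "code (hd P)"] exI[of _ "code (last P)"] exI[of _ "map code P"]
        exI[of _ i]) auto
qed

end

section \<open>The subtree spanned by an orbit\<close>

locale generated_hull = tree_group_action +
  fixes S and x
  assumes finite_gens: "finite S" and gens_subset: "S \<subseteq> carrier G"
    and generate_gens: "generate G S = carrier G"
    and countable_group: "countable (carrier G)" and base: "x \<in> V"
begin

definition segment where "segment s = geodesic E x (\<phi> s x)"

definition hull_base where "hull_base = insert x (\<Union>s\<in>S. set (segment s))"

definition hull_vertices where "hull_vertices = (\<Union>g\<in>carrier G. \<phi> g ` hull_base)"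

definition hull_edge where
  "hull_edge u v \<longleftrightarrow> (\<exists>g\<in>carrier G. \<exists>s\<in>S. \<exists>i. Suc i < length (segment s) \<and>
     ((u = \<phi> g (segment s ! i) \<and> v = \<phi> g (segment s ! Suc i))
      \<or> (v = \<phi> g (segment s ! i) \<and> u = \<phi> g (segment s ! Suc i))))"

lemma simple_path_segment: "s \<in> S \<Longrightarrow> simple_path E x (\<phi> s x) (segment s)"
  unfolding segment_def using simple_path_geodesic base act_in_V gens_subset by blast

lemma segment_subset_V: "s \<in> S \<Longrightarrow> set (segment s) \<subseteq> V"
  using simple_path_subset_V[OF simple_path_segment base] .

lemma hull_base_subset_V: "hull_base \<subseteq> V"
  unfolding hull_base_def using base segment_subset_V by blast

lemma hull_base_subset_hull: "hull_base \<subseteq> hull_vertices"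
proof
  fix q assume "q \<in> hull_base"
  moreover have "\<phi> \<one> q = q" using calculation hull_base_subset_V act_one by blast
  ultimately show "q \<in> hull_vertices" unfolding hull_vertices_def using one_closed by (metis UN_I imageI)
qed

lemma hull_act:
  assumes g: "g \<in> carrier G" and u: "u \<in> hull_vertices"
  shows "\<phi> g u \<in> hull_vertices"
proof -
  obtain h q where h: "h \<in> carrier G" and q: "q \<in> hull_base" and "u = \<phi> h q"
    using u unfolding hull_vertices_def by blast
  then have "\<phi> g u = \<phi> (g \<otimes> h) q" using act_mult[OF g h] hull_base_subset_V by auto
  then show ?thesis unfolding hull_vertices_def using g h q by blast
qed

lemma hull_vertices_subset_V: "hull_vertices \<subseteq> V"
  unfolding hull_vertices_def using hull_base_subset_V act_in_V by blast

lemma countable_hull: "countable hull_vertices"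
proof -
  have "finite hull_base" unfolding hull_base_def using finite_gens by simp
  then show ?thesis
    unfolding hull_vertices_def using countable_group countable_finite by blast
qed

lemma symp_hull_edge: "symp hull_edge"
  unfolding hull_edge_def symp_def by blast

lemma hull_edge_act:
  assumes h: "h \<in> carrier G" and uv: "hull_edge u v"
  shows "hull_edge (\<phi> h u) (\<phi> h v)"
proof -
  obtain g s i where g: "g \<in> carrier G" and s: "s \<in> S" and i: "Suc i < length (segment s)"
    and "(u = \<phi> g (segment s ! i) \<and> v = \<phi> g (segment s ! Suc i))
      \<or> (v = \<phi> g (segment s ! i) \<and> u = \<phi> g (segment s ! Suc i))"
    using uv unfolding hull_edge_def by blast
  moreover have "segment s ! i \<in> V" "segment s ! Suc i \<in> V" using segment_subset_V[OF s] i by auto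
  ultimately have "(\<phi> h u = \<phi> (h \<otimes> g) (segment s ! i) \<and> \<phi> h v = \<phi> (h \<otimes> g) (segment s ! Suc i))
      \<or> (\<phi> h v = \<phi> (h \<otimes> g) (segment s ! i) \<and> \<phi> h u = \<phi> (h \<otimes> g) (segment s ! Suc i))"
    using act_mult[OF h g] by auto
  then show ?thesis unfolding hull_edge_def using h g s i by blast
qed

lemma walk_segment_act: "g \<in> carrier G \<Longrightarrow> s \<in> S \<Longrightarrow> walk hull_edge (map (\<phi> g) (segment s))"
  unfolding walk_def hull_edge_def using simple_path_segment
  by (auto simp: simple_path_def dest: walk_not_Nil)

lemma hull_edge_in_hull: "hull_edge u v \<Longrightarrow> E u v \<and> u \<in> hull_vertices \<and> v \<in> hull_vertices"
proof -
  assume "hull_edge u v"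
  then obtain g s i where g: "g \<in> carrier G" "s \<in> S" "Suc i < length (segment s)"
    "(u = \<phi> g (segment s ! i) \<and> v = \<phi> g (segment s ! Suc i))
      \<or> (v = \<phi> g (segment s ! i) \<and> u = \<phi> g (segment s ! Suc i))"
    unfolding hull_edge_def by blast
  have "segment s ! i \<in> set (segment s)" "segment s ! Suc i \<in> set (segment s)"
    using g(3) by auto
  then have "segment s ! i \<in> hull_base" "segment s ! Suc i \<in> hull_base"
    using g(2) unfolding hull_base_def by blast+
  moreover have "E (segment s ! i) (segment s ! Suc i)"
    using walk_nth simple_path_segment[OF g(2)] g(3) unfolding simple_path_def by blast
  ultimately show ?thesis
    using g(1,4) act_edge[OF g(1)] edge_sym hull_base_subset_hull hull_act by blast
qed

lemma hull_edge_from_base: "g \<in> generate G S \<Longrightarrow> hull_edge\<^sup>*\<^sup>* x (\<phi> g x)"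
proof (induction rule: generate.induct)
  case one
  show ?case using act_one base by simp
next
  case (incl s)
  have "map (\<phi> \<one>) (segment s) = segment s" using segment_subset_V[OF incl] act_one by (simp add: map_idI subset_iff)
  then have "walk hull_edge (segment s)" using walk_segment_act[OF one_closed incl] by simp
  then show ?case using simple_path_segment[OF incl] unfolding simple_path_def rtranclp_iff_walk by blast
next
  case (inv s)
  have s: "s \<in> carrier G" using inv gens_subset by blast
  have "walk hull_edge (map (\<phi> (inv s)) (segment s))" using walk_segment_act[OF inv_closed[OF s] inv] .
  then have "hull_edge\<^sup>*\<^sup>* (\<phi> (inv s) x) x"
    using simple_path_segment[OF inv] act_inv_act[OF s base] unfolding simple_path_def rtranclp_iff_walk
    by (auto simp: hd_map last_map dest: walk_not_Nil intro!: exI[of _ "map (\<phi> (inv s)) (segment s)"])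
  then show ?case using sympD[OF symp_rtranclp[OF symp_hull_edge]] by blast
next
  case (eng h1 h2)
  have h: "h1 \<in> carrier G" "h2 \<in> carrier G"
    using eng(1,2) generate_gens by auto
  have "hull_edge\<^sup>*\<^sup>* (\<phi> h1 x) (\<phi> h1 (\<phi> h2 x))"
    using rtranclp_map[of hull_edge hull_edge "\<phi> h1", OF hull_edge_act[OF h(1)] eng.IH(2)] .
  then show ?case using eng.IH(1) act_mult[OF h base] by simp
qed

lemma hull_connected: "u \<in> hull_vertices \<Longrightarrow> v \<in> hull_vertices \<Longrightarrow> hull_edge\<^sup>*\<^sup>* u v"
proof -
  have from_base: "hull_edge\<^sup>*\<^sup>* x u" if u: "u \<in> hull_vertices" for u
  proof -
    obtain g q where u: "u = \<phi> g q" "g \<in> carrier G" "q \<in> hull_base"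
      using u unfolding hull_vertices_def by blast
    have "hull_edge\<^sup>*\<^sup>* x (\<phi> g x)" using hull_edge_from_base generate_gens u(2) by blast
    moreover have "hull_edge\<^sup>*\<^sup>* (\<phi> g x) u"
    proof (cases "q = x")
      case False
      then obtain s k where s: "s \<in> S" "k < length (segment s)" "q = segment s ! k"
        using u(3) unfolding hull_base_def by (auto simp: in_set_conv_nth)
      then show ?thesis
        using walk_rtranclp_nth[OF walk_segment_act[OF u(2) s(1)], of k] simple_path_segment[OF s(1)] u(1)
        unfolding simple_path_def by (auto simp: hd_map dest: walk_not_Nil)
    qed (simp add: u(1))
    ultimately show ?thesis by simp
  qed
  assume "u \<in> hull_vertices" "v \<in> hull_vertices"
  then have "hull_edge\<^sup>*\<^sup>* u x" "hull_edge\<^sup>*\<^sup>* x v"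
    using from_base sympD[OF symp_rtranclp[OF symp_hull_edge]] by blast+
  then show ?thesis by (rule rtranclp_trans)
qed

sublocale invariant_subtree G V E \<phi> hull_vertices hull_edge
proof unfold_locales
  show "hull_vertices \<noteq> {}" using hull_base_subset_hull unfolding hull_base_def by blast
qed (use hull_edge_in_hull symp_hull_edge hull_edge_act hull_act hull_connected hull_vertices_subset_V
    countable_hull in auto)

lemma hull_edge_cases:
  assumes "hull_edge u v"
  obtains g s i where "g \<in> carrier G" "s \<in> S" "Suc i < length (segment s)"
    "u = \<phi> g (segment s ! i)" "v = \<phi> g (segment s ! Suc i)"
  | g s i where "g \<in> carrier G" "s \<in> S" "Suc i < length (segment s)"
    "v = \<phi> g (segment s ! i)" "u = \<phi> g (segment s ! Suc i)"
  using assms unfolding hull_edge_def by blast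

lemma cocompact_hull: "cocompact G codes code_edge code_act"
proof (rule cocompact_codes)
  have "vorbit G \<phi> ` hull_vertices \<subseteq> vorbit G \<phi> ` hull_base"
    unfolding hull_vertices_def using vorbit_act hull_base_subset_V by auto
  moreover have "finite hull_base" unfolding hull_base_def using finite_gens by simp
  ultimately show "finite (vorbit G \<phi> ` hull_vertices)" by (meson finite_imageI finite_subset)
next
  define I where "I = (SIGMA s:S. {..<length (segment s) - 1})"
  have "finite I" unfolding I_def using finite_gens by simp
  moreover have "eorbit G \<phi> u v \<in> (\<lambda>(s, i). eorbit G \<phi> (segment s ! i) (segment s ! Suc i)) ` I"
    if "hull_edge u v" for u v
    using that
  proof (cases rule: hull_edge_cases)
    case (1 g s i)
    have "segment s ! i \<in> V" "segment s ! Suc i \<in> V" using segment_subset_V[OF 1(2)] 1(3) by auto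
    then have "eorbit G \<phi> u v = eorbit G \<phi> (segment s ! i) (segment s ! Suc i)"
      using eorbit_act[OF 1(1)] 1(4,5) by simp
    then show ?thesis using 1 unfolding I_def by force
  next
    case (2 g s i)
    have "segment s ! i \<in> V" "segment s ! Suc i \<in> V" using segment_subset_V[OF 2(2)] 2(3) by auto
    then have "eorbit G \<phi> u v = eorbit G \<phi> (segment s ! i) (segment s ! Suc i)"
      using eorbit_act[OF 2(1)] 2(4,5) eorbit_swap by metis
    then show ?thesis using 2 unfolding I_def by force
  qed
  then have "(\<lambda>(u, v). eorbit G \<phi> u v) ` {(u, v). hull_edge u v}
      \<subseteq> (\<lambda>(s, i). eorbit G \<phi> (segment s ! i) (segment s ! Suc i)) ` I"
    by auto
  ultimately show "finite ((\<lambda>(u, v). eorbit G \<phi> u v) ` {(u, v). hull_edge u v})"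
    by (meson finite_imageI finite_subset)
qed

lemma no_contractible_edges_hull:
  assumes "axis_vertex x"
  shows "no_contractible_edges G codes code_edge code_act"
proof (rule no_contractible_edges_codes)
  have segment_act: "walk hull_edge (map (\<phi> g) (segment s)) \<and> distinct (map (\<phi> g) (segment s))
      \<and> set (map (\<phi> g) (segment s)) \<subseteq> hull_vertices
      \<and> axis_vertex (hd (map (\<phi> g) (segment s))) \<and> axis_vertex (last (map (\<phi> g) (segment s)))"
    if g: "g \<in> carrier G" and s: "s \<in> S" for g s
  proof -
    have P: "simple_path E (\<phi> g x) (\<phi> g (\<phi> s x)) (map (\<phi> g) (segment s))"
      using simple_path_act[OF simple_path_segment[OF s] base g] .
    have "\<phi> g (\<phi> s x) = \<phi> (g \<otimes> s) x" using act_mult g s gens_subset base by auto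
    moreover have "set (segment s) \<subseteq> hull_base" using s unfolding hull_base_def by blast
    ultimately show ?thesis
      using P walk_segment_act[OF g s] axis_vertex_act[OF assms] g s gens_subset
        hull_base_subset_hull hull_act unfolding simple_path_def by auto
  qed
  fix u v assume "hull_edge u v"
  then show "\<exists>P i. walk hull_edge P \<and> distinct P \<and> set P \<subseteq> hull_vertices \<and> axis_vertex (last P)
      \<and> Suc i < length P \<and> P ! i = u \<and> P ! Suc i = v"
  proof (cases rule: hull_edge_cases)
    case (1 g s i)
    then show ?thesis using segment_act[OF 1(1,2)]
      by (intro exI[of _ "map (\<phi> g) (segment s)"] exI[of _ i]) simp
  next
    case (2 g s i)
    let ?P = "map (\<phi> g) (segment s)"
    have "rev ?P ! (length ?P - 2 - i) = u" "rev ?P ! Suc (length ?P - 2 - i) = v"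
      using 2 by (simp_all add: rev_nth Suc_diff_Suc)
    moreover have "walk hull_edge (rev ?P)" using walk_rev[OF symp_hull_edge] segment_act[OF 2(1,2)] by blast
    moreover have "last (rev ?P) = hd ?P" by (simp add: last_rev)
    ultimately show ?thesis using segment_act[OF 2(1,2)] 2(3)
      by (intro exI[of _ "rev ?P"] exI[of _ "length ?P - 2 - i"]) simp
  qed
qed

end

theorem lemma2p18:
  fixes G :: "('a, 'b) monoid_scheme" and V :: "'v set" and E :: "'v \<Rightarrow> 'v \<Rightarrow> bool"
    and \<phi> :: "'a \<Rightarrow> 'v \<Rightarrow> 'v"
  assumes "group G" and "countable (carrier G)" and "fin_gen G"
    and "tree_action G V E \<phi>" and "acylindrical G V E \<phi>" and "non_elementary G V E \<phi>"
  shows "\<exists>(T :: nat set) (ET :: nat \<Rightarrow> nat \<Rightarrow> bool) (\<psi> :: 'a \<Rightarrow> nat \<Rightarrow> nat).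
           tree_action G T ET \<psi> \<and> cocompact G T ET \<psi>
           \<and> non_elementary G T ET \<psi> \<and> acylindrical G T ET \<psi>
           \<and> no_contractible_edges G T ET \<psi>"
proof -
  have "tree_group_action G V E \<phi>"
    using assms(1,4) by (intro tree_group_action.intro tree_group_action_axioms.intro)
  then interpret tree_group_action G V E \<phi> .
  obtain S where S: "finite S" "S \<subseteq> carrier G" "generate G S = carrier G"
    using assms(3) unfolding fin_gen_def by blast
  obtain x where x: "axis_vertex x"
    using non_elementary_axis_vertex[OF assms(6)] by blast
  have "generated_hull G V E \<phi> S x"
    using \<open>tree_group_action G V E \<phi>\<close> S assms(2) x unfolding axis_vertex_def
    by (intro generated_hull.intro generated_hull_axioms.intro) auto
  then interpret generated_hull G V E \<phi> S x .
  show ?thesis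
    using tree_action_codes cocompact_hull non_elementary_codes[OF assms(6)]
      acylindrical_codes[OF assms(5)] no_contractible_edges_hull[OF x] by blast
qed

end
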